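(* Let $\beta\in(0,1]$ and consider the SAMBA process with learning-rate function $\alpha(p)=\frac{\beta}{1-\log p}$. Then: (a) If $q_{a^\star}(0)\le\frac12$, there exists a constant $\rho<1$ such that $\mathbb P(\sigma^{(1)}<\infty)<\rho$ and, for $k\ge2$, $\mathbb P(\sigma^{(k)}<\infty\mid\sigma^{(k-1)}<\infty)<\rho$; (b) $\displaystyle\sum_{t=0}^\infty\mathbb P\Big(q_{a^\star}(t)\ge\tfrac12\Big)<\infty$; (c) with probability $1$, $q_{a^\star}(t)\to0$ as $t\to\infty$.
   Context: Bandit model: $\mathcal A$ finite set of arms, $N=|\mathcal A|$; $R_a(t)\in\{0,1\}$ independent Bernoulli with mean $r_a$ for $a\in\mathcal A$, $t\in\mathbb Z_+$; unique optimal arm $a^\star$ with $r^\star:=r_{a^\star}>r_a$ for $a\ne a^\star$; $\Delta:=r^\star-\max_{a\ne a^\star}r_a>0$. SAMBA process with learning-rate function $\alpha$: $\mathbf p(0)$ a probability vector with positive entries; at time $t$, $a_\star(t)$ is an arm maximizing $p_a(t)$ (ties broken uniformly at random), $p_\star(t)=p_{a_\star(t)}(t)$; one arm is played, arm $a$ with conditional probability $p_a(t)$ given the past; $I_a(t)$ indicates that $a$ is played, $I_\star(t)=I_{a_\star(t)}(t)$, $R_\star(t)=R_{a_\star(t)}(t)$. For $a\ne a_\star(t)$: $p_a(t+1)=p_a(t)+\alpha(p_a(t))p_a(t)^2\big[\frac{I_a(t)R_a(t)}{p_a(t)}-\frac{I_\star(t)R_\star(t)}{p_\star(t)}\big]$,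 and $p_{a_\star(t)}(t+1)=1-\sum_{a\ne a_\star(t)}p_a(t+1)$. Let $q_{a^\star}(t)=1-p_{a^\star}(t)$. Stopping times: $\tau^{(0)}=\sigma^{(0)}=0$ and for $k\ge1$, $\tau^{(k)}=\min\{t\ge\sigma^{(k-1)}:q_{a^\star}(t)<\frac12\}$, $\sigma^{(k)}=\min\{t\ge\tau^{(k)}:q_{a^\star}(t)\ge\frac12\}$, where a minimum over an empty set (or following an infinite time) is $\infty$. *)

theory Defs
  imports "HOL-Probability.Probability"
begin

text \<open>Arms form a finite linearly ordered
type 'a (the order is only used to turn uniform random numbers into the required
discrete choices).  At each time t the randomness is a triple (u, v, R) with u, v
independent uniform on [0,1] and R :: 'a => bool a vector of independent Bernoulli
rewards R_a(t) with means r a; the triples are i.i.d. over t.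
u selects the played arm (arm a with probability p_a(t)), v breaks ties among the
maximisers of p(t) uniformly at random.\<close>

definition noise :: "('a::{finite,linorder} \<Rightarrow> real) \<Rightarrow> (real \<times> real \<times> ('a \<Rightarrow> bool)) measure" where
  "noise r = uniform_measure lborel {0..1} \<Otimes>\<^sub>M uniform_measure lborel {0..1}
              \<Otimes>\<^sub>M measure_pmf (Pi_pmf UNIV False (\<lambda>a. bernoulli_pmf (r a)))"

definition noise_seq :: "('a::{finite,linorder} \<Rightarrow> real) \<Rightarrow> (nat \<Rightarrow> real \<times> real \<times> ('a \<Rightarrow> bool)) measure" where
  "noise_seq r = PiM UNIV (\<lambda>_. noise r)"

definition argmax_set :: "('a::{finite,linorder} \<Rightarrow> real) \<Rightarrow> 'a set" where
  "argmax_set p = {a. \<forall>b. p b \<le> p a}"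

text \<open>Uniform tie-breaking: v uniform on [0,1] picks an element of the sorted maximiser list.\<close>
definition leader :: "('a::{finite,linorder} \<Rightarrow> real) \<Rightarrow> real \<Rightarrow> 'a" where
  "leader p v = (let L = sorted_list_of_set (argmax_set p)
                 in L ! min (nat \<lfloor>v * real (length L)\<rfloor>) (length L - 1))"

text \<open>Played arm: u uniform on [0,1] selects arm a with probability p a (inverse CDF).\<close>
definition played :: "('a::{finite,linorder} \<Rightarrow> real) \<Rightarrow> real \<Rightarrow> 'a" where
  "played p u = (if \<exists>a. u < (\<Sum>b\<in>{..a}. p b) then (LEAST a. u < (\<Sum>b\<in>{..a}. p b)) else Max UNIV)"

definition samba_step :: "(real \<Rightarrow> real) \<Rightarrow> ('a::{finite,linorder} \<Rightarrow> real) \<Rightarrow> 'a \<Rightarrow> 'a \<Rightarrow> ('a \<Rightarrow> bool) \<Rightarrow> ('a \<Rightarrow> real)" where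
  "samba_step \<alpha> p s b R =
     (let new = (\<lambda>a. p a + \<alpha> (p a) * (p a)\<^sup>2 *
                     ((if b = a \<and> R a then 1 else 0) / p a - (if b = s \<and> R s then 1 else 0) / p s))
      in (\<lambda>a. if a = s then 1 - (\<Sum>c\<in>UNIV - {s}. new c) else new a))"

primrec samba :: "(real \<Rightarrow> real) \<Rightarrow> ('a::{finite,linorder} \<Rightarrow> real) \<Rightarrow> (nat \<Rightarrow> real \<times> real \<times> ('a \<Rightarrow> bool)) \<Rightarrow> nat \<Rightarrow> 'a \<Rightarrow> real" where
  "samba \<alpha> p0 \<omega> 0 = p0"
| "samba \<alpha> p0 \<omega> (Suc t) =
     (let p = samba \<alpha> p0 \<omega> t; (u, v, R) = \<omega> t
      in samba_step \<alpha> p (leader p v) (played p u) R)"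

definition hit :: "(nat \<Rightarrow> bool) \<Rightarrow> enat \<Rightarrow> enat" where
  "hit P s = (case s of \<infinity> \<Rightarrow> \<infinity>
                | enat n \<Rightarrow> (if \<exists>t\<ge>n. P t then enat (LEAST t. n \<le> t \<and> P t) else \<infinity>))"

primrec tau_sigma :: "(nat \<Rightarrow> real) \<Rightarrow> nat \<Rightarrow> enat \<times> enat" where
  "tau_sigma q 0 = (0, 0)"
| "tau_sigma q (Suc k) =
     (let \<tau> = hit (\<lambda>t. q t < 1/2) (snd (tau_sigma q k)) in (\<tau>, hit (\<lambda>t. q t \<ge> 1/2) \<tau>))"

definition sigma_k :: "(nat \<Rightarrow> real) \<Rightarrow> nat \<Rightarrow> enat" where
  "sigma_k q k = snd (tau_sigma q k)"

end

theory Submission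
  imports Defs
begin

(*
  While the optimal arm a* leads (q < 1/2), the expected change of q in one step is at most -D * W,
  where D is the reward gap and W = (sum over a \<noteq> a* of alpha(p_a) p_a^2) \<ge> 0; so 2q is a
  supermartingale, and from below 1/2 the process climbs back to 1/2 with probability at most
  rho < 1 (one step from q in (1/4, 1/2) already loses a fixed amount). Since the noise is
  i.i.d., conditioning on the first step turns this into a factor rho per upcrossing of 1/2,
  which is (a).

  For (b), V = A q + 1 / min(p_a*, p_cap)^2 decreases in expectation by a fixed c > 0 whenever
  q \<ge> e: through the drift of q when a* leads; through the barrier 1/p^2 when a* does not
  lead and p_a* is small (its expected change is at most -D alpha(p)/p \<le> -D beta, which is
  where the choice alpha(p) = beta / (1 - log p) enters); and through A q otherwise. Summing
  the decrements gives sum_t P(q_t \<ge> e) \<le> V(p_0) / c, and Borel-Cantelli for e = c/(n+1)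
  gives (c).
*)

definition prob_vector :: "('a::finite \<Rightarrow> real) \<Rightarrow> bool" where
  "prob_vector p \<longleftrightarrow> (\<forall>a. 0 < p a) \<and> sum p UNIV = 1"

definition samba_jump :: "(real \<Rightarrow> real) \<Rightarrow> ('a::{finite,linorder} \<Rightarrow> real) \<Rightarrow> 'a \<Rightarrow> 'a \<Rightarrow> 'a \<Rightarrow> real" where
  "samba_jump \<alpha> p s b = (if b = s
     then (\<lambda>a. if a = s then p s + (\<Sum>c\<in>UNIV-{s}. \<alpha> (p c) * (p c)\<^sup>2 / p s) else p a - \<alpha> (p a) * (p a)\<^sup>2 / p s)
     else (\<lambda>a. if a = s then p s - \<alpha> (p b) * p b else if a = b then p b + \<alpha> (p b) * p b else p a))"

lemma samba_step_eq_jump: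
  assumes "sum p UNIV = 1" "\<And>a. p a \<noteq> 0"
  shows "samba_step \<alpha> p s b R = (if R b then samba_jump \<alpha> p s b else p)"
proof -
  define M where "M = (\<lambda>a. p a + \<alpha> (p a) * (p a)\<^sup>2 *
                     ((if b = a \<and> R a then 1 else 0) / p a - (if b = s \<and> R s then 1 else 0) / p s))"
  have step: "samba_step \<alpha> p s b R = (\<lambda>a. if a = s then 1 - sum M (UNIV - {s}) else M a)"
    unfolding samba_step_def Let_def M_def by simp
  consider "\<not> R b" | "R b" "b = s" | "R b" "b \<noteq> s" by blast
  then show ?thesis
  proof cases
    case 1
    then have "M = p" by (auto simp: M_def)
    with 1 show ?thesis using assms(1) by (auto simp: step sum_diff1)
  next
    case 2
    have Ma: "M a = p a - \<alpha> (p a) * (p a)\<^sup>2 / p s" if "a \<noteq> s" for a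
      using 2 that by (simp add: M_def)
    show ?thesis unfolding step using 2 assms(1)
      by (intro ext) (simp add: samba_jump_def Ma sum_subtractf sum_diff1)
  next
    case 3
    then have M: "M = (\<lambda>a. p a + (if a = b then \<alpha> (p b) * p b else 0))"
      using assms(2) by (auto simp: M_def power2_eq_square)
    show ?thesis unfolding step using 3 assms(1)
      by (intro ext) (simp add: samba_jump_def M sum.distrib sum_diff1)
  qed
qed

lemma sum_samba_step: "sum (samba_step \<alpha> p s b R) UNIV = 1"
  by (simp add: samba_step_def Let_def sum.remove[of UNIV s])

lemma argmax_set_nonempty: "argmax_set (p::'a::{finite,linorder} \<Rightarrow> real) \<noteq> {}"
proof -
  obtain a where "p a = Max (range p)"
    by (metis (mono_tags, lifting) Max_in UNIV_not_empty finite finite_imageI image_iff image_is_empty)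
  then have "a \<in> argmax_set p" by (auto simp: argmax_set_def)
  then show ?thesis by auto
qed

lemma leader_in_argmax_set: "leader p v \<in> argmax_set p"
proof -
  let ?L = "sorted_list_of_set (argmax_set p)"
  have "set ?L = argmax_set p" and "?L \<noteq> []"
    using argmax_set_nonempty[of p] by simp_all
  then show ?thesis unfolding leader_def Let_def
    by (metis diff_less length_greater_0_conv min.cobounded2 nth_mem order_le_less_trans zero_less_one)
qed

definition samba_rate :: "real \<Rightarrow> real \<Rightarrow> real" where
  "samba_rate \<beta> p = \<beta> / (1 - ln p)"

lemma one_le_one_minus_ln:
  "0 < p \<Longrightarrow> p \<le> 1 \<Longrightarrow> 1 \<le> 1 - ln (p::real)"
  using ln_le_zero_iff[of p] by simp

lemma samba_rate_nonneg:
  assumes "0 \<le> \<beta>" "0 < p" "p \<le> 1"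
  shows "0 \<le> samba_rate \<beta> p"
proof -
  have "1 \<le> 1 - ln p" using assms one_le_one_minus_ln by blast
  then have "0 < 1 - ln p" by linarith
  then show ?thesis unfolding samba_rate_def using assms by (intro divide_nonneg_pos)
qed

lemma samba_rate_pos:
  assumes "0 < \<beta>" "0 < p" "p \<le> 1"
  shows "0 < samba_rate \<beta> p"
proof -
  have "1 \<le> 1 - ln p" using assms one_le_one_minus_ln by blast
  then have "0 < 1 - ln p" by linarith
  then show ?thesis unfolding samba_rate_def using assms by (intro divide_pos_pos)
qed

lemma samba_rate_mono:
  assumes "0 \<le> \<beta>" "0 < x" "x \<le> y" "y \<le> 1"
  shows "samba_rate \<beta> x \<le> samba_rate \<beta> y"
proof -
  have "1 \<le> 1 - ln x" using assms one_le_one_minus_ln by auto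
  moreover have "1 \<le> 1 - ln y" using assms one_le_one_minus_ln by auto
  moreover have "ln x \<le> ln y" using assms by simp
  ultimately show ?thesis unfolding samba_rate_def using assms
    by (intro divide_left_mono mult_pos_pos; linarith)
qed

lemma samba_rate_le_two_thirds:
  assumes "0 \<le> \<beta>" "\<beta> \<le> 1" "0 < p" "p \<le> 1/2"
  shows "samba_rate \<beta> p \<le> 2/3"
proof -
  have "ln p \<le> ln (1/2)" using assms by simp
  also have "\<dots> \<le> 1/2 - 1" by (rule ln_le_minus_one) simp
  finally have "3/2 \<le> 1 - ln p" by simp
  then have "\<beta> / (1 - ln p) \<le> 1 / (3/2)" using assms
    by (intro frac_le) auto
  then show ?thesis by (simp add: samba_rate_def)
qed

lemma samba_rate_div_ge:
  assumes "0 \<le> \<beta>" "0 < p" "p \<le> 1"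
  shows "\<beta> \<le> samba_rate \<beta> p / p"
proof -
  have "ln (1/p) \<le> 1/p - 1" by (rule ln_le_minus_one) (use assms in simp)
  then have "p * (1 - ln p) \<le> 1" using assms by (simp add: ln_div field_simps)
  moreover have "1 \<le> 1 - ln p" using assms one_le_one_minus_ln by blast
  then have "0 < p * (1 - ln p)" using assms by (intro mult_pos_pos; linarith)
  ultimately have "\<beta> \<le> \<beta> / (p * (1 - ln p))" using assms
    by (simp add: le_divide_eq mult_left_le)
  then show ?thesis by (simp add: samba_rate_def mult.commute)
qed

lemma samba_rate_le_small:
  assumes "0 \<le> \<beta>" "\<beta> \<le> 1" "0 < c" "0 < p" "p \<le> exp (1 - 1 / c)"
  shows "samba_rate \<beta> p \<le> c"
proof -
  have "1 / c \<le> 1 - ln p"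
    using assms ln_le_cancel_iff[of p "exp (1 - 1 / c)"] by simp
  then have "\<beta> / (1 - ln p) \<le> 1 / (1 / c)"
    using assms by (intro frac_le) auto
  then show ?thesis by (simp add: samba_rate_def)
qed

lemma prob_vector_pos: "prob_vector p \<Longrightarrow> 0 < p a"
  unfolding prob_vector_def by simp

lemma prob_vector_sum: "prob_vector p \<Longrightarrow> sum p UNIV = 1"
  unfolding prob_vector_def by simp

lemma prob_vector_add_le_1:
  assumes "prob_vector p" "a \<noteq> b"
  shows "p a + p b \<le> 1"
proof -
  have "sum p {a, b} \<le> sum p UNIV"
    using assms by (intro sum_mono2) (auto simp: prob_vector_def less_imp_le)
  then show ?thesis using assms by (simp add: prob_vector_def)
qed

lemma prob_vector_le_1:
  assumes "prob_vector p"
  shows "p a \<le> 1"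
proof -
  have "sum p {a} \<le> sum p UNIV"
    using assms by (intro sum_mono2) (auto simp: prob_vector_def less_imp_le)
  then show ?thesis using assms by (simp add: prob_vector_def)
qed

lemma argmax_set_ge: "s \<in> argmax_set p \<Longrightarrow> p a \<le> p s"
  by (simp add: argmax_set_def)

lemma prob_vector_nonleader_le_half:
  "prob_vector p \<Longrightarrow> s \<in> argmax_set p \<Longrightarrow> a \<noteq> s \<Longrightarrow> p a \<le> 1/2"
  using prob_vector_add_le_1[of p a s] argmax_set_ge[of s p a] by simp

lemma prob_vector_leader_ge: fixes p :: "'a::{finite,linorder} \<Rightarrow> real"
  assumes "prob_vector p" "s \<in> argmax_set p" shows "1 / real CARD('a) \<le> p s"
proof -
  have "1 = sum p UNIV" using prob_vector_sum[OF assms(1)] by simp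
  also have "\<dots> \<le> sum (\<lambda>_. p s) (UNIV::'a set)"
    by (rule sum_mono) (use argmax_set_ge[OF assms(2)] in auto)
  also have "\<dots> = real CARD('a) * p s" by simp
  finally show ?thesis by (simp add: divide_le_eq mult.commute)
qed

lemma prob_vector_exists_large:
  assumes "prob_vector p" "0 < e" "e \<le> 1 - p (x::'a::{finite,linorder})"
  shows "\<exists>a. a \<noteq> x \<and> e / real CARD('a) \<le> p a"
proof (rule ccontr)
  assume "\<not> ?thesis"
  then have lt: "\<And>a. a \<noteq> x \<Longrightarrow> p a < e / real CARD('a)" by force
  have ne: "UNIV - {x} \<noteq> {}"
  proof
    assume "UNIV - {x} = {}"
    then have "sum p (UNIV - {x}) = 0" by (metis sum.empty)
    then show False using prob_vector_sum[OF assms(1)] assms by (simp add: sum_diff1)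
  qed
  have "sum p (UNIV - {x}) < sum (\<lambda>_. e / real CARD('a)) (UNIV - {x})"
    by (rule sum_strict_mono) (use lt ne in auto)
  also have "\<dots> = real (card (UNIV - {x})) * (e / real CARD('a))" by simp
  also have "\<dots> \<le> real CARD('a) * (e / real CARD('a))"
    using assms(2) by (intro mult_right_mono) (auto simp: card_Diff_subset)
  also have "\<dots> = e" by simp
  finally show False using prob_vector_sum[OF assms(1)] assms by (simp add: sum_diff1)
qed

lemma samba_step_prob_vector:
  "prob_vector p \<Longrightarrow> samba_step \<alpha> p s b R = (if R b then samba_jump \<alpha> p s b else p)"
  by (rule samba_step_eq_jump) (auto simp: prob_vector_def dest: less_imp_neq[symmetric])

lemma jump_ge_third:
  assumes "prob_vector p" "s \<in> argmax_set p" "0 \<le> \<beta>" "\<beta> \<le> 1"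
  shows "p a / 3 \<le> samba_jump (samba_rate \<beta>) p s b a"
proof -
  have pos: "\<And>c. 0 < p c" using assms by (simp add: prob_vector_def)
  have alb: "\<And>c. c \<noteq> s \<Longrightarrow> samba_rate \<beta> (p c) \<le> 2/3"
    using samba_rate_le_two_thirds prob_vector_nonleader_le_half assms pos by blast
  have aln: "\<And>c. 0 \<le> samba_rate \<beta> (p c)"
    using samba_rate_nonneg assms pos prob_vector_le_1 by blast
  show ?thesis
  proof (cases "b = s")
    case True
    show ?thesis
    proof (cases "a = s")
      case True
      have "0 \<le> (\<Sum>c\<in>UNIV-{s}. samba_rate \<beta> (p c) * (p c)\<^sup>2 / p s)"
        using aln pos by (intro sum_nonneg divide_nonneg_pos mult_nonneg_nonneg) auto
      then show ?thesis using \<open>b = s\<close> True pos[of s] by (simp add: samba_jump_def)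
    next
      case False
      have r: "p a / p s \<le> 1" using argmax_set_ge[OF assms(2)] pos by simp
      have "samba_rate \<beta> (p a) * (p a)\<^sup>2 / p s = samba_rate \<beta> (p a) * p a * (p a / p s)"
        by (simp add: power2_eq_square)
      also have "\<dots> \<le> (2/3) * p a * 1"
        using alb[OF False] aln[of a] pos[of a] r pos[of s]
        by (intro mult_mono) auto
      finally show ?thesis using \<open>b = s\<close> False by (simp add: samba_jump_def)
    qed
  next
    case False
    show ?thesis
    proof (cases "a = s")
      case True
      have "samba_rate \<beta> (p b) * p b \<le> (2/3) * p s"
        using alb[OF False] aln[of b] pos[of b] argmax_set_ge[OF assms(2), of b]
        by (intro mult_mono) auto
      then show ?thesis using False True by (simp add: samba_jump_def)
    next
      case a: False
      then show ?thesis using False aln[of b] pos[of b] pos[of a]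
        by (auto simp: samba_jump_def)
    qed
  qed
qed

lemma prob_vector_jump:
  assumes "prob_vector p" "s \<in> argmax_set p" "0 \<le> \<beta>" "\<beta> \<le> 1"
  shows "prob_vector (samba_jump (samba_rate \<beta>) p s b)"
proof -
  have "0 < samba_jump (samba_rate \<beta>) p s b a" for a
    using jump_ge_third[OF assms, of a b] prob_vector_pos[OF assms(1), of a] by linarith
  moreover have "sum (samba_jump (samba_rate \<beta>) p s b) UNIV = 1"
    using samba_step_prob_vector[OF assms(1), of _ s b "\<lambda>_. True"] sum_samba_step by metis
  ultimately show ?thesis by (simp add: prob_vector_def)
qed

definition samba_update :: "real \<Rightarrow> ('a::{finite,linorder} \<Rightarrow> real) \<Rightarrow> real \<times> real \<times> ('a \<Rightarrow> bool) \<Rightarrow> 'a \<Rightarrow> real" where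
  "samba_update \<beta> p x = (case x of (u, v, R) \<Rightarrow> samba_step (samba_rate \<beta>) p (leader p v) (played p u) R)"

lemma samba_update_eq:
  "prob_vector p \<Longrightarrow> samba_update \<beta> p (u, v, R)
     = (if R (played p u) then samba_jump (samba_rate \<beta>) p (leader p v) (played p u) else p)"
  unfolding samba_update_def by (simp add: samba_step_prob_vector)

lemma samba_update_cases:
  "prob_vector p \<Longrightarrow> samba_update \<beta> p x = p \<or> samba_update \<beta> p x
     = samba_jump (samba_rate \<beta>) p (leader p (fst (snd x))) (played p (fst x))"
  by (cases x) (auto simp: samba_update_eq)

lemma prob_vector_update:
  "prob_vector p \<Longrightarrow> 0 \<le> \<beta> \<Longrightarrow> \<beta> \<le> 1 \<Longrightarrow> prob_vector (samba_update \<beta> p x)"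
  using samba_update_cases[of p \<beta> x] prob_vector_jump[OF _ leader_in_argmax_set] by metis

lemma samba_Suc:
  "samba (samba_rate \<beta>) p \<omega> (Suc t) = samba_update \<beta> (samba (samba_rate \<beta>) p \<omega> t) (\<omega> t)"
  by (simp add: samba_update_def Let_def split: prod.split)

lemma samba_shift:
  "samba (samba_rate \<beta>) p (case_nat x \<omega>) (Suc t) = samba (samba_rate \<beta>) (samba_update \<beta> p x) \<omega> t"
  by (induction t) (simp_all add: samba_Suc del: samba.simps(2))

lemma prob_vector_samba:
  "prob_vector p \<Longrightarrow> 0 \<le> \<beta> \<Longrightarrow> \<beta> \<le> 1 \<Longrightarrow> prob_vector (samba (samba_rate \<beta>) p \<omega> t)"
  by (induction t) (simp_all add: samba_Suc prob_vector_update del: samba.simps(2))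

section \<open>Inequalities for the inverse square\<close>

lemma inverse_square_one_plus_le:
  assumes "0 \<le> (a::real)"
  shows "1 / (1 + a)\<^sup>2 \<le> 1 - 2*a + 3*a\<^sup>2"
proof -
  have "(1 - 2*a + 3*a\<^sup>2) * (1 + a)\<^sup>2 = 1 + 4*a^3 + 3*a^4"
    by (simp add: power2_eq_square power3_eq_cube power4_eq_xxxx algebra_simps)
  also have "\<dots> \<ge> 1" using assms by simp
  finally show ?thesis using assms by (simp add: divide_le_eq)
qed

lemma inverse_square_one_minus_le:
  assumes "0 \<le> (x::real)" "x \<le> 1/4"
  shows "1 / (1 - x)\<^sup>2 \<le> 1 + 2*x + 8*x\<^sup>2"
proof -
  have "(1 + 2*x + 8*x\<^sup>2) * (1 - x)\<^sup>2 = 1 + x\<^sup>2 * (5 - 14*x + 8*x\<^sup>2)"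
    by (simp add: power2_eq_square power3_eq_cube power4_eq_xxxx algebra_simps)
  also have "\<dots> \<ge> 1" using assms by (simp add: add_nonneg_nonneg)
  finally show ?thesis using assms by (simp add: divide_le_eq)
qed

lemma inverse_square_gain_le:
  fixes p a r :: real
  assumes "0 < p" "0 \<le> a" "0 \<le> r"
  shows "p * r * (1 / (p + a * p)\<^sup>2 - 1 / p\<^sup>2) \<le> r * (a / p) * (3 * a - 2)"
proof -
  have "p + a * p = p * (1 + a)" by (simp add: algebra_simps)
  then have "1 / (p + a * p)\<^sup>2 - 1 / p\<^sup>2 = (1 / (1 + a)\<^sup>2 - 1) / p\<^sup>2"
    by (simp add: power_mult_distrib diff_divide_distrib)
  also have "\<dots> \<le> a * (3 * a - 2) / p\<^sup>2"
    using inverse_square_one_plus_le[OF assms(2)]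
    by (intro divide_right_mono) (auto simp: algebra_simps power2_eq_square)
  finally have "p * r * (1 / (p + a * p)\<^sup>2 - 1 / p\<^sup>2) \<le> p * r * (a * (3 * a - 2) / p\<^sup>2)"
    using assms by (intro mult_left_mono) auto
  also have "\<dots> = r * (a / p) * (3 * a - 2)"
    using assms by (simp add: field_simps power2_eq_square)
  finally show ?thesis .
qed

lemma inverse_square_loss_le:
  fixes p ps a r :: real
  assumes "0 < p" "p \<le> ps" "0 \<le> a" "a \<le> 1/4" "0 \<le> r"
  shows "ps * r * (1 / (p - a * p\<^sup>2 / ps)\<^sup>2 - 1 / p\<^sup>2) \<le> r * (a / p) * (2 + 8 * a)"
proof -
  define x where "x = a * (p / ps)"
  have ps: "0 < ps" using assms by simp
  have x: "0 \<le> x" "x \<le> a"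
    using assms mult_left_le[of "p / ps" a] unfolding x_def by auto
  have "1 / (p - a * p\<^sup>2 / ps)\<^sup>2 - 1 / p\<^sup>2 = (1 / (1 - x)\<^sup>2 - 1) / p\<^sup>2"
  proof -
    have "p - a * p\<^sup>2 / ps = p * (1 - x)"
      unfolding x_def using ps by (simp add: field_simps power2_eq_square)
    then show ?thesis by (simp add: power_mult_distrib diff_divide_distrib)
  qed
  also have "\<dots> \<le> x * (2 + 8 * a) / p\<^sup>2"
  proof (intro divide_right_mono)
    have "1 / (1 - x)\<^sup>2 - 1 \<le> x * (2 + 8 * x)"
      using inverse_square_one_minus_le[of x] x assms(4) by (simp add: algebra_simps power2_eq_square)
    also have "\<dots> \<le> x * (2 + 8 * a)" using x by (intro mult_left_mono) auto
    finally show "1 / (1 - x)\<^sup>2 - 1 \<le> x * (2 + 8 * a)" .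
  qed simp
  finally have "ps * r * (1 / (p - a * p\<^sup>2 / ps)\<^sup>2 - 1 / p\<^sup>2) \<le> ps * r * (x * (2 + 8 * a) / p\<^sup>2)"
    using ps assms by (intro mult_left_mono) auto
  also have "\<dots> = r * (a / p) * (2 + 8 * a)"
    unfolding x_def using assms ps by (simp add: field_simps power2_eq_square)
  finally show ?thesis .
qed

(* Expected change of the barrier 1/p^2 of a non-leading arm of probability p: it gains a * p
   when it is played and rewarded, and loses a * p^2 / ps when the leader (probability ps) is. *)
lemma inverse_square_drift_le:
  fixes p ps a r1 r2 D :: real
  assumes p: "0 < p" "p \<le> ps" and a: "0 \<le> a" "a \<le> D / 11" and D: "0 < D" "D \<le> 1"
    and r: "0 \<le> r1" "r1 \<le> 1" "0 \<le> r2" "r2 \<le> 1" "r2 + D \<le> r1"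
  shows "p * r1 * (1 / (p + a * p)\<^sup>2 - 1 / p\<^sup>2) + ps * r2 * (1 / (p - a * p\<^sup>2 / ps)\<^sup>2 - 1 / p\<^sup>2)
         \<le> - (D * a / p)"
proof -
  have "p * r1 * (1 / (p + a * p)\<^sup>2 - 1 / p\<^sup>2) + ps * r2 * (1 / (p - a * p\<^sup>2 / ps)\<^sup>2 - 1 / p\<^sup>2)
      \<le> r1 * (a / p) * (3 * a - 2) + r2 * (a / p) * (2 + 8 * a)"
    using inverse_square_gain_le[of p a r1] inverse_square_loss_le[of p ps a r2] p a D r
    by (intro add_mono) auto
  also have "\<dots> = (a / p) * (a * (3 * r1 + 8 * r2) - 2 * (r1 - r2))"
    by (simp add: algebra_simps)
  also have "\<dots> \<le> (a / p) * (a * 11 - 2 * D)"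
    using a p r by (intro mult_left_mono add_mono diff_mono) auto
  also have "\<dots> \<le> (a / p) * (- D)"
    using a p by (intro mult_left_mono) auto
  finally show ?thesis by (simp add: mult.commute)
qed

locale samba_bandit =
  fixes r :: "'a::{finite,linorder} \<Rightarrow> real" and astar :: 'a and \<beta> D :: real
  assumes r0: "\<And>a. 0 \<le> r a" and r1: "\<And>a. r a \<le> 1"
    and gap: "\<And>a. a \<noteq> astar \<Longrightarrow> r a + D \<le> r astar"
    and D: "0 < D" "D \<le> 1" and beta: "0 < \<beta>" "\<beta> \<le> 1"
begin

abbreviation "J p s b \<equiv> samba_jump (samba_rate \<beta>) p s b"

definition step_mean :: "(('a \<Rightarrow> real) \<Rightarrow> real) \<Rightarrow> ('a \<Rightarrow> real) \<Rightarrow> 'a \<Rightarrow> real" where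
  "step_mean G p s = (\<Sum>b\<in>UNIV. p b * (r b * G (J p s b) + (1 - r b) * G p))"

lemma step_mean_eq:
  assumes "prob_vector p"
  shows "step_mean G p s = G p + (\<Sum>b\<in>UNIV. p b * r b * (G (J p s b) - G p))"
proof -
  have "step_mean G p s = (\<Sum>b\<in>UNIV. p b * G p + p b * r b * (G (J p s b) - G p))"
    unfolding step_mean_def by (rule sum.cong) (auto simp: algebra_simps)
  also have "\<dots> = sum p UNIV * G p + (\<Sum>b\<in>UNIV. p b * r b * (G (J p s b) - G p))"
    by (simp add: sum.distrib sum_distrib_right)
  finally show ?thesis using prob_vector_sum[OF assms] by simp
qed

lemma step_mean_mono:
  assumes "prob_vector p" "\<And>p'. G p' \<le> H p'"
  shows "step_mean G p s \<le> step_mean H p s"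
  unfolding step_mean_def using prob_vector_pos[OF assms(1)] r0 r1 assms(2)
  by (intro sum_mono mult_left_mono add_mono) (auto intro: less_imp_le)

definition leader_gain :: "('a \<Rightarrow> real) \<Rightarrow> real" where
  "leader_gain p = (\<Sum>c\<in>UNIV-{astar}. samba_rate \<beta> (p c) * (p c)\<^sup>2)"

lemma samba_rate_prob_vector_nonneg:
  "prob_vector p \<Longrightarrow> 0 \<le> samba_rate \<beta> (p c)"
  using samba_rate_nonneg beta prob_vector_pos prob_vector_le_1 by (metis less_imp_le)

lemma leader_gain_nonneg: "prob_vector p \<Longrightarrow> 0 \<le> leader_gain p"
  unfolding leader_gain_def using samba_rate_prob_vector_nonneg
  by (intro sum_nonneg mult_nonneg_nonneg) auto

definition gain_floor :: "real \<Rightarrow> real" where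
  "gain_floor e = samba_rate \<beta> (e / real CARD('a)) * (e / real CARD('a))\<^sup>2"

lemma gain_floor_pos: "0 < e \<Longrightarrow> e \<le> 1 \<Longrightarrow> 0 < gain_floor e"
proof -
  assume e: "0 < e" "e \<le> 1"
  have c: "1 \<le> real CARD('a)" by (simp add: Suc_leI)
  have "e \<le> real CARD('a)" using e c by linarith
  then have "e / real CARD('a) \<le> 1" by (simp add: divide_le_eq)
  then have "0 < samba_rate \<beta> (e / real CARD('a))" using e by (intro samba_rate_pos beta) auto
  then show ?thesis unfolding gain_floor_def using e by simp
qed

lemma leader_gain_ge:
  assumes "prob_vector p" "0 < e" "e \<le> 1 - p astar"
  shows "gain_floor e \<le> leader_gain p"
proof -
  obtain a where a: "a \<noteq> astar" "e / real CARD('a) \<le> p a"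
    using prob_vector_exists_large[OF assms] by blast
  have c: "0 < real CARD('a)" by simp
  have "gain_floor e \<le> samba_rate \<beta> (p a) * (p a)\<^sup>2" unfolding gain_floor_def
    using a c assms prob_vector_le_1[OF assms(1), of a] prob_vector_pos[OF assms(1), of a] beta
    by (intro mult_mono samba_rate_mono power_mono) (auto intro!: samba_rate_nonneg)
  also have "\<dots> = (\<Sum>c\<in>{a}. samba_rate \<beta> (p c) * (p c)\<^sup>2)" by simp
  also have "\<dots> \<le> leader_gain p" unfolding leader_gain_def
    using a samba_rate_prob_vector_nonneg[OF assms(1)]
    by (intro sum_mono2) auto
  finally show ?thesis .
qed

lemma jump_leader_self: "J p astar astar astar = p astar + leader_gain p / p astar"
  unfolding samba_jump_def leader_gain_def by (simp add: sum_divide_distrib)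

lemma jump_leader_other:
  "b \<noteq> astar \<Longrightarrow> J p astar b astar = p astar - samba_rate \<beta> (p b) * p b"
  unfolding samba_jump_def by simp

lemma jump_nonleader_leader:
  "s \<noteq> astar \<Longrightarrow> J p s s astar = p astar - samba_rate \<beta> (p astar) * (p astar)\<^sup>2 / p s"
  unfolding samba_jump_def by simp

lemma jump_nonleader_optimal:
  "s \<noteq> astar \<Longrightarrow> J p s astar astar = p astar + samba_rate \<beta> (p astar) * p astar"
  unfolding samba_jump_def by simp

lemma jump_nonleader_other:
  "s \<noteq> astar \<Longrightarrow> b \<noteq> s \<Longrightarrow> b \<noteq> astar \<Longrightarrow> J p s b astar = p astar"
  unfolding samba_jump_def by simp

lemma drift_sum_leader:
  assumes "prob_vector p"
  shows "(\<Sum>b\<in>UNIV. p b * r b * (\<phi> (J p astar b astar) - \<phi> (p astar)))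
       = p astar * r astar * (\<phi> (p astar + leader_gain p / p astar) - \<phi> (p astar))
         + (\<Sum>b\<in>UNIV-{astar}. p b * r b * (\<phi> (p astar - samba_rate \<beta> (p b) * p b) - \<phi> (p astar)))"
  by (subst sum.remove[of UNIV astar]) (simp_all add: jump_leader_self jump_leader_other)

lemma drift_sum_nonleader:
  assumes "prob_vector p" "s \<noteq> astar"
  shows "(\<Sum>b\<in>UNIV. p b * r b * (\<phi> (J p s b astar) - \<phi> (p astar)))
       = p astar * r astar * (\<phi> (p astar + samba_rate \<beta> (p astar) * p astar) - \<phi> (p astar))
         + p s * r s * (\<phi> (p astar - samba_rate \<beta> (p astar) * (p astar)\<^sup>2 / p s) - \<phi> (p astar))"
proof -
  have "(\<Sum>b\<in>UNIV. p b * r b * (\<phi> (J p s b astar) - \<phi> (p astar)))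
      = (\<Sum>b\<in>{astar, s}. p b * r b * (\<phi> (J p s b astar) - \<phi> (p astar)))"
    by (rule sum.mono_neutral_right) (auto simp: jump_nonleader_other assms)
  also have "\<dots> = p astar * r astar * (\<phi> (J p s astar astar) - \<phi> (p astar))
               + p s * r s * (\<phi> (J p s s astar) - \<phi> (p astar))"
    using assms by simp
  finally show ?thesis using assms by (simp add: jump_nonleader_leader jump_nonleader_optimal)
qed

lemma q_drift_leader:
  assumes "prob_vector p"
  shows "(\<Sum>b\<in>UNIV. p b * r b * ((1 - J p astar b astar) - (1 - p astar))) \<le> - D * leader_gain p"
proof -
  have ps: "0 < p astar" using prob_vector_pos[OF assms] by simp
  have "(\<Sum>b\<in>UNIV. p b * r b * ((1 - J p astar b astar) - (1 - p astar)))
     = p astar * r astar * ((1 - (p astar + leader_gain p / p astar)) - (1 - p astar))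
         + (\<Sum>b\<in>UNIV-{astar}. p b * r b * ((1 - (p astar - samba_rate \<beta> (p b) * p b)) - (1 - p astar)))"
    using drift_sum_leader[OF assms, of "\<lambda>y. 1 - y"] by simp
  also have "\<dots> = - (r astar * leader_gain p)
               + (\<Sum>b\<in>UNIV-{astar}. r b * (samba_rate \<beta> (p b) * (p b)\<^sup>2))"
    using ps by (simp add: power2_eq_square algebra_simps)
  also have "\<dots> = - (\<Sum>b\<in>UNIV-{astar}. (r astar - r b) * (samba_rate \<beta> (p b) * (p b)\<^sup>2))"
    unfolding leader_gain_def by (simp add: sum_distrib_left sum_subtractf algebra_simps)
  also have "\<dots> \<le> - (\<Sum>b\<in>UNIV-{astar}. D * (samba_rate \<beta> (p b) * (p b)\<^sup>2))"
    using gap samba_rate_prob_vector_nonneg[OF assms]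
    by (intro le_imp_neg_le sum_mono mult_right_mono) (auto simp: algebra_simps)
  also have "\<dots> = - D * leader_gain p" unfolding leader_gain_def sum_distrib_left[symmetric] by simp
  finally show ?thesis .
qed

definition rho :: real where "rho = max (1/2) (1 - 2 * D * gain_floor (1/4))"

lemma rho_less_1: "rho < 1"
  unfolding rho_def using gain_floor_pos[of "1/4"] D by simp

lemma rho_ge_half: "1/2 \<le> rho" unfolding rho_def by simp

lemma leader_eq_optimal:
  assumes "prob_vector p" "1/2 < p astar" "s \<in> argmax_set p"
  shows "s = astar"
proof (rule ccontr)
  assume "s \<noteq> astar"
  then have "p astar + p s \<le> 1" using prob_vector_add_le_1[OF assms(1), of astar s] by simp
  moreover have "p astar \<le> p s" using argmax_set_ge[OF assms(3)] .
  ultimately show False using assms(2) by simp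
qed

lemma step_mean_twice_q:
  assumes "prob_vector p" "1/2 < p astar" "s \<in> argmax_set p"
  shows "step_mean (\<lambda>p. 2 * (1 - p astar)) p s \<le> 2 * (1 - p astar)"
proof -
  have s: "s = astar" using leader_eq_optimal[OF assms] .
  have "(\<Sum>b\<in>UNIV. p b * r b * (2 * (1 - J p s b astar) - 2 * (1 - p astar)))
      = 2 * (\<Sum>b\<in>UNIV. p b * r b * ((1 - J p astar b astar) - (1 - p astar)))"
    unfolding s by (simp add: sum_distrib_left algebra_simps)
  also have "\<dots> \<le> 2 * (- D * leader_gain p)" using q_drift_leader[OF assms(1)] by simp
  also have "\<dots> \<le> 0" using leader_gain_nonneg[OF assms(1)] D by (simp add: mult_nonneg_nonneg)
  finally show ?thesis using step_mean_eq[OF assms(1)] by simp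
qed

lemma step_mean_capped_twice_q:
  assumes "prob_vector p" "1/2 < p astar" "s \<in> argmax_set p"
  shows "step_mean (\<lambda>p. min 1 (2 * (1 - p astar))) p s \<le> rho"
proof (cases "1 - p astar \<le> 1/4")
  case True
  have "step_mean (\<lambda>p. min 1 (2 * (1 - p astar))) p s \<le> step_mean (\<lambda>p. 2 * (1 - p astar)) p s"
    by (rule step_mean_mono[OF assms(1)]) simp
  also have "\<dots> \<le> 2 * (1 - p astar)" by (rule step_mean_twice_q[OF assms])
  also have "\<dots> \<le> rho" using True rho_ge_half by simp
  finally show ?thesis .
next
  case False
  have s: "s = astar" using leader_eq_optimal[OF assms] .
  have ps: "0 < p astar" using prob_vector_pos[OF assms(1)] .
  define G where "G = (\<lambda>p::'a \<Rightarrow> real. min 1 (2 * (1 - p astar)))"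
  define H where "H = (\<lambda>b. if b = astar then 2 * ((1 - p astar) - leader_gain p / p astar) else 1)"
  have GJ: "G (J p s b) \<le> H b" for b
    unfolding G_def H_def s using jump_leader_self[of p] by auto
  have "step_mean G p s \<le> (\<Sum>b\<in>UNIV. p b * (r b * H b + (1 - r b) * 1))"
    unfolding step_mean_def using prob_vector_pos[OF assms(1)] r0 r1 GJ
    by (intro sum_mono mult_left_mono add_mono) (auto simp: G_def intro: less_imp_le)
  also have "\<dots> = (\<Sum>b\<in>UNIV. p b + p b * r b * (H b - 1))"
    by (rule sum.cong) (auto simp: algebra_simps)
  also have "\<dots> = 1 + (\<Sum>b\<in>UNIV. p b * r b * (H b - 1))"
    using prob_vector_sum[OF assms(1)] by (simp add: sum.distrib)
  also have "(\<Sum>b\<in>UNIV. p b * r b * (H b - 1)) = p astar * r astar * (H astar - 1)"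
    by (subst sum.remove[of UNIV astar]) (simp_all add: H_def)
  also have "p astar * r astar * (H astar - 1)
               = - (p astar * r astar * (2 * p astar - 1)) - 2 * r astar * leader_gain p"
    unfolding H_def using ps by (simp add: algebra_simps)
  also have "\<dots> \<le> - 2 * r astar * leader_gain p"
    using assms(2) ps r0[of astar] by (simp add: mult_nonneg_nonneg)
  finally have mean_le: "step_mean G p s \<le> 1 - 2 * r astar * leader_gain p" by simp
  obtain a where a: "a \<noteq> astar"
    using prob_vector_exists_large[OF assms(1), of "1 - p astar"] False by auto
  have rD: "D \<le> r astar" using gap[OF a] r0[of a] by simp
  have Wg: "gain_floor (1/4) \<le> leader_gain p" using leader_gain_ge[OF assms(1), of "1/4"] False
    by simp
  have "D * gain_floor (1/4) \<le> r astar * leader_gain p"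
    using rD Wg gain_floor_pos[of "1/4"] D by (intro mult_mono) auto
  then have "step_mean G p s \<le> 1 - 2 * D * gain_floor (1/4)" using mean_le by simp
  then show ?thesis unfolding G_def rho_def by simp
qed

section \<open>A Lyapunov function\<close>

(* p_low \<le> 1/(6 n_arms) keeps the barrier flat around a leading a* (whose probability is at
   least 1/n_arms), and p_low \<le> exp(1 - 11/D) gives alpha(p) \<le> D/11 below p_low. The first
   term of lyap_coeff lets the linear part beat the bounded barrier increase once p_a* > p_low;
   the second makes the drift of q worth drift_gain when a* leads and q \<ge> e. *)
definition n_arms :: real where "n_arms = real CARD('a)"
definition p_low :: real where "p_low = min (1 / (6 * n_arms)) (exp (1 - 11 / D))"
definition p_cap :: real where "p_cap = 2 * p_low"
definition barrier :: "real \<Rightarrow> real" where "barrier y = 1 / (min y p_cap)\<^sup>2"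
definition drift_gain :: real where "drift_gain = D * \<beta>"
definition lyap_coeff :: "real \<Rightarrow> real" where
  "lyap_coeff e = max ((9 / p_low\<^sup>2 + drift_gain) / (D * samba_rate \<beta> p_low * p_low\<^sup>2))
                      (drift_gain / (D * gain_floor e))"
definition lyap :: "real \<Rightarrow> ('a \<Rightarrow> real) \<Rightarrow> real" where
  "lyap e p = lyap_coeff e * (1 - p astar) + barrier (p astar)"

lemma n_arms_ge_1: "1 \<le> n_arms" unfolding n_arms_def by (simp add: Suc_leI)

lemma p_low_pos: "0 < p_low" unfolding p_low_def using n_arms_ge_1 by simp

lemma p_low_le: "p_low \<le> 1 / (6 * n_arms)" "p_low \<le> exp (1 - 11 / D)" unfolding p_low_def by auto

lemma p_low_le_sixth: "p_low \<le> 1/6"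
proof -
  have "1 / (6 * n_arms) \<le> 1 / 6" using n_arms_ge_1 by (simp add: divide_le_eq)
  then show ?thesis using p_low_le by linarith
qed

lemma drift_gain_pos: "0 < drift_gain" unfolding drift_gain_def using D beta by simp

lemma samba_rate_p_low_pos: "0 < samba_rate \<beta> p_low"
  using samba_rate_pos[OF beta(1) p_low_pos] p_low_le_sixth by simp

lemma lyap_coeff_ge_large:
  "(9 / p_low\<^sup>2 + drift_gain) \<le> lyap_coeff e * (D * samba_rate \<beta> p_low * p_low\<^sup>2)"
proof -
  have pos: "0 < D * samba_rate \<beta> p_low * p_low\<^sup>2" using D samba_rate_p_low_pos p_low_pos
    by simp
  have "(9 / p_low\<^sup>2 + drift_gain) / (D * samba_rate \<beta> p_low * p_low\<^sup>2) \<le> lyap_coeff e"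
    unfolding lyap_coeff_def by simp
  then show ?thesis by (simp only: pos_divide_le_eq[OF pos])
qed

lemma lyap_coeff_ge_gain:
  assumes "0 < e" "e \<le> 1"
  shows "drift_gain \<le> lyap_coeff e * (D * gain_floor e)"
proof -
  have pos: "0 < D * gain_floor e" using D gain_floor_pos[OF assms] by simp
  have "drift_gain / (D * gain_floor e) \<le> lyap_coeff e" unfolding lyap_coeff_def by simp
  then show ?thesis by (simp only: pos_divide_le_eq[OF pos])
qed

lemma lyap_coeff_nonneg: "0 \<le> lyap_coeff e"
proof -
  have "0 < 9 / p_low\<^sup>2 + drift_gain" using p_low_pos drift_gain_pos
    by (intro add_pos_pos divide_pos_pos) auto
  then have "0 < (9 / p_low\<^sup>2 + drift_gain) / (D * samba_rate \<beta> p_low * p_low\<^sup>2)"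
    using D samba_rate_p_low_pos p_low_pos by (intro divide_pos_pos) auto
  then show ?thesis unfolding lyap_coeff_def by simp
qed

lemma barrier_nonneg: "0 \<le> barrier y" unfolding barrier_def by simp

lemma barrier_below_cap: "0 < y \<Longrightarrow> y \<le> p_cap \<Longrightarrow> barrier y = 1 / y\<^sup>2"
  unfolding barrier_def by simp

lemma barrier_above_cap: "p_cap \<le> y \<Longrightarrow> barrier y = 1 / p_cap\<^sup>2"
  unfolding barrier_def by simp

lemma barrier_le:
  assumes "p_low / 3 \<le> y"
  shows "barrier y \<le> 9 / p_low\<^sup>2"
proof -
  have m: "p_low / 3 \<le> min y p_cap" using assms p_low_pos unfolding p_cap_def by simp
  have "0 < p_low / 3" using p_low_pos by simp
  then have "(p_low / 3)\<^sup>2 \<le> (min y p_cap)\<^sup>2" using m by (intro power_mono) auto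
  then have "1 / (min y p_cap)\<^sup>2 \<le> 1 / (p_low / 3)\<^sup>2" using \<open>0 < p_low / 3\<close>
    by (intro divide_left_mono mult_pos_pos) auto
  then show ?thesis unfolding barrier_def by (simp add: power_divide)
qed

lemma lyap_nonneg:
  assumes "prob_vector p"
  shows "0 \<le> lyap e p"
proof -
  have "0 \<le> lyap_coeff e * (1 - p astar)"
    using lyap_coeff_nonneg[of e] prob_vector_le_1[OF assms, of astar] by simp
  then show ?thesis unfolding lyap_def using barrier_nonneg[of "p astar"] by simp
qed

lemma lyap_drift_leader:
  assumes "prob_vector p" "0 < e" "e \<le> 1/2" and leads: "astar \<in> argmax_set p"
  shows "step_mean (lyap e) p astar \<le> lyap e p - (if e \<le> 1 - p astar then drift_gain else 0)"
proof -
  have ps: "1 / n_arms \<le> p astar"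
    using prob_vector_leader_ge[OF assms(1) leads] unfolding n_arms_def .
  have p2le: "p_cap \<le> 1 / (3 * n_arms)" unfolding p_cap_def using p_low_le(1) by simp
  have pge: "1 / (3 * n_arms) \<le> p astar / 3" using ps by simp
  have hJ: "barrier (J p astar b astar) = barrier (p astar)" for b
  proof -
    have "p astar / 3 \<le> J p astar b astar" using jump_ge_third[OF assms(1) leads] beta by simp
    then have "p_cap \<le> J p astar b astar" using p2le pge by linarith
    moreover have "p_cap \<le> p astar"
      using p2le pge n_arms_ge_1 prob_vector_pos[OF assms(1), of astar]
      by linarith
    ultimately show ?thesis using barrier_above_cap by simp
  qed
  have "(\<Sum>b\<in>UNIV. p b * r b * (lyap e (J p astar b) - lyap e p))
      = lyap_coeff e * (\<Sum>b\<in>UNIV. p b * r b * ((1 - J p astar b astar) - (1 - p astar)))"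
    unfolding lyap_def using hJ by (simp add: sum_distrib_left algebra_simps)
  also have "\<dots> \<le> lyap_coeff e * (- D * leader_gain p)"
    using q_drift_leader[OF assms(1)] lyap_coeff_nonneg by (intro mult_left_mono) auto
  also have "\<dots> \<le> - (if e \<le> 1 - p astar then drift_gain else 0)"
  proof (cases "e \<le> 1 - p astar")
    case True
    have "drift_gain \<le> lyap_coeff e * (D * gain_floor e)" using lyap_coeff_ge_gain assms by simp
    also have "\<dots> \<le> lyap_coeff e * (D * leader_gain p)"
      using leader_gain_ge[OF assms(1,2) True] lyap_coeff_nonneg D by (intro mult_left_mono) auto
    finally show ?thesis using True by simp
  next
    case False
    then show ?thesis using lyap_coeff_nonneg leader_gain_nonneg[OF assms(1)] D
      by (simp add: mult_nonneg_nonneg)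
  qed
  finally show ?thesis using step_mean_eq[OF assms(1)] by simp
qed

lemma barrier_drift_nonleader_small:
  assumes p: "prob_vector p" and s: "s \<in> argmax_set p" "s \<noteq> astar" and small: "p astar \<le> p_low"
  shows "p astar * r astar * (barrier (J p s astar astar) - barrier (p astar))
         + p s * r s * (barrier (J p s s astar) - barrier (p astar)) \<le> - drift_gain"
proof -
  define x where "x = p astar"
  define a where "a = samba_rate \<beta> x"
  have x: "0 < x" "x \<le> p s" "x \<le> p_low"
    using prob_vector_pos[OF p] argmax_set_ge[OF s(1)] small unfolding x_def by auto
  have x_half: "x \<le> 1/2" using x p_low_le_sixth by linarith
  have a: "0 \<le> a" "a \<le> D / 11"
    using samba_rate_nonneg[of \<beta> x] samba_rate_le_small[of \<beta> "D / 11" x] beta D x x_half p_low_le(2)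
    unfolding a_def by auto
  have y1: "J p s astar astar = x + a * x" and y2: "J p s s astar = x - a * x\<^sup>2 / p s"
    using s(2) unfolding x_def a_def by (simp_all add: jump_nonleader_optimal jump_nonleader_leader)
  have "x / 3 \<le> J p s b astar" for b
    using jump_ge_third[OF p s(1), of \<beta> astar b] beta unfolding x_def by simp
  then have lower: "x / 3 \<le> x + a * x" "x / 3 \<le> x - a * x\<^sup>2 / p s"
    unfolding y1 y2 by (metis y1, metis y2)
  have "a * x \<le> x" "0 \<le> a * x\<^sup>2 / p s"
    using x a D prob_vector_pos[OF p, of s] by (auto intro: mult_left_le_one_le)
  then have upper: "x + a * x \<le> p_cap" "x - a * x\<^sup>2 / p s \<le> p_cap" "x \<le> p_cap"
    using x p_low_pos unfolding p_cap_def by linarith+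
  have barrier_eqs: "barrier (J p s astar astar) = 1 / (x + a * x)\<^sup>2"
      "barrier (J p s s astar) = 1 / (x - a * x\<^sup>2 / p s)\<^sup>2" "barrier x = 1 / x\<^sup>2"
    unfolding y1 y2 using lower upper x by (intro barrier_below_cap; linarith)+
  have "x * r astar * (1 / (x + a * x)\<^sup>2 - 1 / x\<^sup>2)
          + p s * r s * (1 / (x - a * x\<^sup>2 / p s)\<^sup>2 - 1 / x\<^sup>2)
      \<le> - (D * a / x)"
    using inverse_square_drift_le[OF x(1,2) a D] r0 r1 gap[OF s(2)] by simp
  also have "\<dots> \<le> - (D * \<beta>)"
    using samba_rate_div_ge[of \<beta> x] beta x x_half D unfolding a_def
    by (simp add: mult_left_mono times_divide_eq_right[symmetric] del: times_divide_eq_right)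
  finally show ?thesis unfolding x_def[symmetric] barrier_eqs drift_gain_def .
qed

lemma barrier_drift_nonleader_le:
  assumes p: "prob_vector p" and s: "s \<in> argmax_set p" "s \<noteq> astar" and large: "p_low < p astar"
  shows "p astar * r astar * (barrier (J p s astar astar) - barrier (p astar))
         + p s * r s * (barrier (J p s s astar) - barrier (p astar)) \<le> 9 / p_low\<^sup>2"
proof -
  have increment: "barrier (J p s b astar) - barrier (p astar) \<le> 9 / p_low\<^sup>2" for b
    using jump_ge_third[OF p s(1), of \<beta> astar b] beta large barrier_nonneg[of "p astar"]
      barrier_le[of "J p s b astar"] by simp
  have summand: "p b * r b * (barrier (J p s b astar) - barrier (p astar))
                   \<le> p b * (9 / p_low\<^sup>2)" for b
  proof -
    have "p b * r b * (barrier (J p s b astar) - barrier (p astar)) \<le> p b * r b * (9 / p_low\<^sup>2)"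
      using increment[of b] prob_vector_pos[OF p, of b] r0[of b] by (intro mult_left_mono) auto
    also have "\<dots> \<le> p b * (9 / p_low\<^sup>2)"
      using prob_vector_pos[OF p, of b] r1[of b] by (intro mult_right_mono mult_left_le) auto
    finally show ?thesis .
  qed
  have "(p astar + p s) * (9 / p_low\<^sup>2) \<le> 9 / p_low\<^sup>2"
    using prob_vector_add_le_1[OF p s(2)[symmetric]] prob_vector_pos[OF p, of astar]
      prob_vector_pos[OF p, of s]
    by (intro mult_left_le_one_le) auto
  then show ?thesis using summand[of astar] summand[of s] unfolding distrib_right by linarith
qed

lemma step_mean_lyap_nonleader:
  assumes p: "prob_vector p" and s: "s \<noteq> astar"
  shows "step_mean (lyap e) p s = lyap e p
           - lyap_coeff e * (samba_rate \<beta> (p astar) * (p astar)\<^sup>2) * (r astar - r s)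
           + (p astar * r astar * (barrier (J p s astar astar) - barrier (p astar))
              + p s * r s * (barrier (J p s s astar) - barrier (p astar)))"
proof -
  define \<phi> where "\<phi> y = lyap_coeff e * (1 - y) + barrier y" for y
  have "(\<Sum>b\<in>UNIV. p b * r b * (lyap e (J p s b) - lyap e p))
      = (\<Sum>b\<in>UNIV. p b * r b * (\<phi> (J p s b astar) - \<phi> (p astar)))"
    unfolding lyap_def \<phi>_def by simp
  also have "\<dots> = - lyap_coeff e * (samba_rate \<beta> (p astar) * (p astar)\<^sup>2) * (r astar - r s)
           + (p astar * r astar * (barrier (J p s astar astar) - barrier (p astar))
              + p s * r s * (barrier (J p s s astar) - barrier (p astar)))"
    unfolding drift_sum_nonleader[OF p s] jump_nonleader_optimal[OF s] jump_nonleader_leader[OF s]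
    using prob_vector_pos[OF p, of s] by (simp add: \<phi>_def field_simps power2_eq_square)
  finally show ?thesis using step_mean_eq[OF p, of "lyap e" s] by simp
qed

lemma lyap_drift_nonleader:
  assumes p: "prob_vector p" and e: "0 < e" "e \<le> 1/2" and s: "s \<in> argmax_set p" "s \<noteq> astar"
  shows "step_mean (lyap e) p s \<le> lyap e p - (if e \<le> 1 - p astar then drift_gain else 0)"
proof -
  let ?a = "samba_rate \<beta> (p astar) * (p astar)\<^sup>2"
  have a: "0 \<le> ?a"
    using samba_rate_prob_vector_nonneg[OF p] by simp
  have q_large: "e \<le> 1 - p astar"
    using prob_vector_nonleader_le_half[OF p s(1) s(2)[symmetric]] e by simp
  have linear: "lyap_coeff e * ?a * D \<le> lyap_coeff e * ?a * (r astar - r s)"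
    using gap[OF s(2)] lyap_coeff_nonneg[of e] a samba_rate_prob_vector_nonneg[OF p, of astar]
    by (intro mult_left_mono mult_nonneg_nonneg) (auto simp: algebra_simps)
  show ?thesis
  proof (cases "p astar \<le> p_low")
    case True
    have "0 \<le> lyap_coeff e * ?a * D"
      using lyap_coeff_nonneg[of e] a D by simp
    then show ?thesis unfolding if_P[OF q_large]
      using step_mean_lyap_nonleader[OF p s(2), of e] barrier_drift_nonleader_small[OF p s True]
        linear by linarith
  next
    case False
    have "samba_rate \<beta> p_low * p_low\<^sup>2 \<le> ?a"
      using False p_low_pos beta samba_rate_mono[of \<beta> p_low "p astar"] samba_rate_p_low_pos
        prob_vector_le_1[OF p]
      by (intro mult_mono power_mono) auto
    then have "lyap_coeff e * (D * samba_rate \<beta> p_low * p_low\<^sup>2) \<le> lyap_coeff e * ?a * D"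
      using lyap_coeff_nonneg[of e] D
        mult_left_mono[of "samba_rate \<beta> p_low * p_low\<^sup>2" ?a "lyap_coeff e * D"]
      by (simp add: ac_simps)
    then show ?thesis unfolding if_P[OF q_large]
      using lyap_coeff_ge_large[of e] step_mean_lyap_nonleader[OF p s(2), of e]
        barrier_drift_nonleader_le[OF p s] False linear by linarith
  qed
qed

lemma lyap_drift:
  assumes "prob_vector p" "0 < e" "e \<le> 1/2" "s \<in> argmax_set p"
  shows "step_mean (lyap e) p s \<le> lyap e p - (if e \<le> 1 - p astar then drift_gain else 0)"
  using lyap_drift_leader[OF assms(1-3)] lyap_drift_nonleader[OF assms] assms(4)
  by (cases "s = astar") auto

end

section \<open>The noise space\<close>

abbreviation "unif01 \<equiv> uniform_measure lborel {0..1::real}"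

abbreviation "rewards r \<equiv> measure_pmf (Pi_pmf UNIV False (\<lambda>a::'a::{finite,linorder}. bernoulli_pmf (r a)))"

lemma Least_eq_iff:
  fixes Q :: "'a::{finite,linorder} \<Rightarrow> bool"
  assumes "\<exists>a. Q a"
  shows "(LEAST a. Q a) = b \<longleftrightarrow> Q b \<and> (\<forall>c. c < b \<longrightarrow> \<not> Q c)"
proof -
  define m where "m = Min {a. Q a}"
  have ne: "{a. Q a} \<noteq> {}" using assms by auto
  have Qm: "Q m" unfolding m_def using Min_in[OF _ ne] by auto
  have mle: "\<And>y. Q y \<Longrightarrow> m \<le> y" unfolding m_def by (auto intro: Min_le)
  have L: "(LEAST a. Q a) = m" by (rule Least_equality) (use Qm mle in auto)
  show ?thesis
  proof
    assume "(LEAST a. Q a) = b"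
    then have "m = b" using L by simp
    then show "Q b \<and> (\<forall>c. c < b \<longrightarrow> \<not> Q c)" using Qm mle
      by (auto simp: not_le[symmetric])
  next
    assume h: "Q b \<and> (\<forall>c. c < b \<longrightarrow> \<not> Q c)"
    then have "m \<le> b" using mle by auto
    moreover have "\<not> m < b" using h Qm by auto
    ultimately show "(LEAST a. Q a) = b" using L by simp
  qed
qed

lemma played_eq:
  "played p u = b \<longleftrightarrow>
     ((\<exists>a. u < (\<Sum>x\<in>{..a}. p x)) \<and> u < (\<Sum>x\<in>{..b}. p x) \<and> (\<forall>c. c < b \<longrightarrow> \<not> u < (\<Sum>x\<in>{..c}. p x)))
     \<or> (\<not> (\<exists>a. u < (\<Sum>x\<in>{..a}. p x)) \<and> b = Max UNIV)"
  unfolding played_def using Least_eq_iff[of "\<lambda>a. u < (\<Sum>x\<in>{..a}. p x)" b] by auto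

lemma measurable_played:
  fixes P :: "'m \<Rightarrow> 'a::{finite,linorder} \<Rightarrow> real"
  assumes [measurable]: "\<And>a. (\<lambda>\<omega>. P \<omega> a) \<in> borel_measurable M" "U \<in> borel_measurable M"
  shows "(\<lambda>\<omega>. played (P \<omega>) (U \<omega>)) \<in> M \<rightarrow>\<^sub>M count_space UNIV"
  unfolding measurable_count_space_eq2_countable
proof (intro conjI ballI)
  fix b :: 'a
  have "(\<lambda>\<omega>. played (P \<omega>) (U \<omega>)) -` {b} \<inter> space M = {\<omega>\<in>space M. played (P \<omega>) (U \<omega>) = b}"
    by auto
  also have "\<dots> =
    {\<omega>\<in>space M. ((\<exists>a. U \<omega> < (\<Sum>x\<in>{..a}. P \<omega> x)) \<and> U \<omega> < (\<Sum>x\<in>{..b}. P \<omega> x) \<and> (\<forall>c. c < b \<longrightarrow> \<not> U \<omega> < (\<Sum>x\<in>{..c}. P \<omega> x)))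
     \<or> (\<not> (\<exists>a. U \<omega> < (\<Sum>x\<in>{..a}. P \<omega> x)) \<and> b = Max UNIV)}"
    by (simp only: played_eq)
  also have "\<dots> \<in> sets M" by measurable
  finally show "(\<lambda>\<omega>. played (P \<omega>) (U \<omega>)) -` {b} \<inter> space M \<in> sets M" .
qed auto

lemma measurable_argmax:
  fixes P :: "'m \<Rightarrow> 'a::{finite,linorder} \<Rightarrow> real"
  assumes [measurable]: "\<And>a. (\<lambda>\<omega>. P \<omega> a) \<in> borel_measurable M"
  shows "(\<lambda>\<omega>. argmax_set (P \<omega>)) \<in> M \<rightarrow>\<^sub>M count_space UNIV"
  unfolding measurable_count_space_eq2_countable
proof (intro conjI ballI)
  fix A :: "'a set"
  have "(\<lambda>\<omega>. argmax_set (P \<omega>)) -` {A} \<inter> space M = {\<omega>\<in>space M. \<forall>a. (a \<in> A \<longleftrightarrow> (\<forall>b. P \<omega> b \<le> P \<omega> a))}"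
    by (auto simp: argmax_set_def)
  also have "\<dots> \<in> sets M" by measurable
  finally show "(\<lambda>\<omega>. argmax_set (P \<omega>)) -` {A} \<inter> space M \<in> sets M" .
qed auto

lemma measurable_leader:
  fixes P :: "'m \<Rightarrow> 'a::{finite,linorder} \<Rightarrow> real"
  assumes [measurable]: "\<And>a. (\<lambda>\<omega>. P \<omega> a) \<in> borel_measurable M" "V \<in> borel_measurable M"
  shows "(\<lambda>\<omega>. leader (P \<omega>) (V \<omega>)) \<in> M \<rightarrow>\<^sub>M count_space UNIV"
proof -
  define f where "f = (\<lambda>(A::'a set) \<omega>. (let L = sorted_list_of_set A in L ! min (nat \<lfloor>V \<omega> * real (length L)\<rfloor>) (length L - 1)))"
  have "(\<lambda>\<omega>. f (argmax_set (P \<omega>)) \<omega>) \<in> M \<rightarrow>\<^sub>M count_space UNIV"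
  proof (rule measurable_compose_countable'[where f=f and g="\<lambda>\<omega>. argmax_set (P \<omega>)" and I=UNIV])
    fix A :: "'a set"
    define L where "L = sorted_list_of_set A"
    have "(\<lambda>\<omega>. \<lfloor>V \<omega> * real (length L)\<rfloor>) \<in> M \<rightarrow>\<^sub>M count_space UNIV"
      by measurable
    moreover have "(\<lambda>z::int. L ! min (nat z) (length L - 1))
                     \<in> count_space UNIV \<rightarrow>\<^sub>M count_space UNIV"
      by simp
    ultimately have "(\<lambda>\<omega>. L ! min (nat \<lfloor>V \<omega> * real (length L)\<rfloor>) (length L - 1))
                       \<in> M \<rightarrow>\<^sub>M count_space UNIV"
      using measurable_compose by fastforce
    then show "(\<lambda>\<omega>. f A \<omega>) \<in> M \<rightarrow>\<^sub>M count_space UNIV"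
      unfolding f_def L_def Let_def by simp
  qed (auto intro: measurable_argmax)
  then show ?thesis unfolding f_def leader_def by simp
qed

lemma measurable_step_fixed:
  fixes P :: "'m \<Rightarrow> 'a::{finite,linorder} \<Rightarrow> real" and R :: "'m \<Rightarrow> 'a \<Rightarrow> bool"
  assumes [measurable]: "\<And>a. (\<lambda>\<omega>. P \<omega> a) \<in> borel_measurable M" "\<And>c. Measurable.pred M (\<lambda>\<omega>. R \<omega> c)"
  shows "(\<lambda>\<omega>. samba_step (samba_rate \<beta>) (P \<omega>) s b (R \<omega>) a) \<in> borel_measurable M"
  unfolding samba_step_def Let_def samba_rate_def by measurable

lemma measurable_step:
  fixes P :: "'m \<Rightarrow> 'a::{finite,linorder} \<Rightarrow> real" and R :: "'m \<Rightarrow> 'a \<Rightarrow> bool"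
  assumes [measurable]: "\<And>a. (\<lambda>\<omega>. P \<omega> a) \<in> borel_measurable M" "\<And>c. Measurable.pred M (\<lambda>\<omega>. R \<omega> c)"
    "U \<in> borel_measurable M" "V \<in> borel_measurable M"
  shows "(\<lambda>\<omega>. samba_step (samba_rate \<beta>) (P \<omega>) (leader (P \<omega>) (V \<omega>)) (played (P \<omega>) (U \<omega>)) (R \<omega>) a)
           \<in> borel_measurable M"
proof (rule measurable_compose_countable'[where f="\<lambda>s \<omega>. samba_step (samba_rate \<beta>) (P \<omega>) s (played (P \<omega>) (U \<omega>)) (R \<omega>) a"
      and g="\<lambda>\<omega>. leader (P \<omega>) (V \<omega>)" and I=UNIV])
  fix s :: 'a
  show "(\<lambda>\<omega>. samba_step (samba_rate \<beta>) (P \<omega>) s (played (P \<omega>) (U \<omega>)) (R \<omega>) a) \<in> borel_measurable M"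
    by (rule measurable_compose_countable'[where f="\<lambda>b \<omega>. samba_step (samba_rate \<beta>) (P \<omega>) s b (R \<omega>) a"
      and g="\<lambda>\<omega>. played (P \<omega>) (U \<omega>)" and I=UNIV])
       (simp_all add: measurable_step_fixed[OF assms(1,2)] measurable_played[OF assms(1,3)])
qed (simp_all add: measurable_leader[OF assms(1,4)])

lemma measurable_into_unif01_eq: "measurable M unif01 = measurable M borel"
  by (rule measurable_cong_sets) simp_all

lemma measurable_noise_fst[measurable]: "fst \<in> noise r \<rightarrow>\<^sub>M borel"
proof -
  have "fst \<in> noise r \<rightarrow>\<^sub>M unif01" unfolding noise_def by (rule measurable_fst)
  then show ?thesis by (simp add: measurable_into_unif01_eq)
qed

lemma measurable_noise_snd:
  "snd \<in> noise r \<rightarrow>\<^sub>M (unif01 \<Otimes>\<^sub>M rewards r)"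
  unfolding noise_def by (rule measurable_snd)

lemma measurable_noise_fst_snd[measurable]:
  "(\<lambda>x. fst (snd x)) \<in> noise r \<rightarrow>\<^sub>M borel"
proof -
  have "(\<lambda>x. fst (snd x)) \<in> noise r \<rightarrow>\<^sub>M unif01"
    using measurable_compose[OF measurable_noise_snd[of r] measurable_fst] by (simp add: comp_def)
  then show ?thesis by (simp add: measurable_into_unif01_eq)
qed

lemma measurable_noise_reward[measurable]:
  "(\<lambda>x. snd (snd x) c) \<in> noise (r::'a::{finite,linorder} \<Rightarrow> real) \<rightarrow>\<^sub>M count_space UNIV"
proof -
  have "(\<lambda>x. snd (snd x)) \<in> noise r \<rightarrow>\<^sub>M rewards r"
    using measurable_compose[OF measurable_noise_snd[of r] measurable_snd] by (simp add: comp_def)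
  then have rewards: "(\<lambda>x. snd (snd x)) \<in> noise r \<rightarrow>\<^sub>M count_space UNIV"
    using measurable_cong_sets[OF refl sets_measure_pmf_count_space, of "noise r" "Pi_pmf UNIV False (\<lambda>a. bernoulli_pmf (r a))"]
    by simp
  have component: "(\<lambda>R::'a \<Rightarrow> bool. R c) \<in> count_space UNIV \<rightarrow>\<^sub>M count_space UNIV"
    by simp
  from measurable_compose[OF rewards component] show ?thesis by simp
qed

lemma measurable_samba_update:
  fixes P :: "'m \<Rightarrow> 'a::{finite,linorder} \<Rightarrow> real" and r :: "'a \<Rightarrow> real"
  assumes P: "\<And>a. (\<lambda>\<omega>. P \<omega> a) \<in> borel_measurable M" and X: "X \<in> M \<rightarrow>\<^sub>M noise r"
  shows "(\<lambda>\<omega>. samba_update \<beta> (P \<omega>) (X \<omega>) a) \<in> borel_measurable M"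
proof -
  have m1: "(\<lambda>\<omega>. fst (X \<omega>)) \<in> borel_measurable M"
    using measurable_compose[OF X measurable_noise_fst] by (simp add: comp_def)
  have m2: "(\<lambda>\<omega>. fst (snd (X \<omega>))) \<in> borel_measurable M"
    using measurable_compose[OF X measurable_noise_fst_snd] by (simp add: comp_def)
  have m3: "Measurable.pred M (\<lambda>\<omega>. snd (snd (X \<omega>)) c)" for c
    using measurable_compose[OF X measurable_noise_reward[of c r]] unfolding pred_def
    by (simp add: comp_def)
  have "(\<lambda>\<omega>. samba_step (samba_rate \<beta>) (P \<omega>) (leader (P \<omega>) (fst (snd (X \<omega>)))) (played (P \<omega>) (fst (X \<omega>))) (snd (snd (X \<omega>))) a) \<in> borel_measurable M"
    by (rule measurable_step[OF P m3 m1 m2])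
  then show ?thesis unfolding samba_update_def by (simp add: case_prod_unfold)
qed

lemma measurable_samba:
  "(\<lambda>\<omega>. samba (samba_rate \<beta>) p \<omega> t a)
     \<in> borel_measurable (noise_seq (r::'a::{finite,linorder} \<Rightarrow> real))"
proof (induction t arbitrary: a)
  case 0
  then show ?case by simp
next
  case (Suc t)
  have X: "(\<lambda>\<omega>. \<omega> t) \<in> noise_seq r \<rightarrow>\<^sub>M noise r"
    unfolding noise_seq_def by (rule measurable_component_singleton) simp
  show ?case unfolding samba_Suc by (rule measurable_samba_update[OF Suc X])
qed

lemma prob_space_unif01: "prob_space unif01" by (rule prob_space_uniform_measure) simp_all

lemma prob_space_noise: "prob_space (noise r)"
  unfolding noise_def by (intro prob_space_pair prob_space_unif01 prob_space_measure_pmf)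

lemma prob_space_noise_seq: "prob_space (noise_seq r)"
  unfolding noise_seq_def by (intro prob_space_PiM prob_space_noise)

lemma sigma_finite_noise_seq: "sigma_finite_measure (noise_seq r)"
  using prob_space_noise_seq prob_space_imp_sigma_finite by blast

lemma sequence_space_noise: "sequence_space (noise r)"
  unfolding sequence_space_def product_prob_space_def product_prob_space_axioms_def product_sigma_finite_def
  using prob_space_noise prob_space_imp_sigma_finite by blast

lemma nn_integral_noise_seq_split:
  assumes f: "f \<in> borel_measurable (noise_seq r)"
  shows "(\<integral>\<^sup>+\<omega>. f \<omega> \<partial>noise_seq r)
           = (\<integral>\<^sup>+\<omega>. (\<integral>\<^sup>+\<omega>'. f (case_nat (\<omega> 0) \<omega>') \<partial>noise_seq r) \<partial>noise_seq r)"
    and "(\<lambda>\<omega>. \<integral>\<^sup>+\<omega>'. f (case_nat (\<omega> 0) \<omega>') \<partial>noise_seq r) \<in> borel_measurable (noise_seq r)"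
proof -
  interpret S: sequence_space "noise r" by (rule sequence_space_noise)
  have m: "(\<lambda>(\<omega>,\<omega>'). comb_seq (Suc 0) \<omega> \<omega>') \<in> (noise_seq r \<Otimes>\<^sub>M noise_seq r) \<rightarrow>\<^sub>M noise_seq r"
    using measurable_comb_seq unfolding noise_seq_def .
  have mf: "(\<lambda>z. f (case_nat (fst z 0) (snd z))) \<in> borel_measurable (noise_seq r \<Otimes>\<^sub>M noise_seq r)"
    using measurable_compose[OF m f] by (simp add: case_prod_unfold comp_def)
  have "(\<integral>\<^sup>+\<omega>. f \<omega> \<partial>noise_seq r)
          = (\<integral>\<^sup>+\<omega>. f \<omega> \<partial>distr (noise_seq r \<Otimes>\<^sub>M noise_seq r) (noise_seq r) (\<lambda>(\<omega>,\<omega>'). comb_seq (Suc 0) \<omega> \<omega>'))"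
    using S.PiM_comb_seq[of "Suc 0"] by (simp add: noise_seq_def)
  also have "\<dots> = (\<integral>\<^sup>+z. f (case_nat (fst z 0) (snd z)) \<partial>(noise_seq r \<Otimes>\<^sub>M noise_seq r))"
    by (subst nn_integral_distr[OF m]) (use f in \<open>simp_all add: case_prod_unfold measurable_distr_eq1\<close>)
  also have "\<dots> = (\<integral>\<^sup>+\<omega>. (\<integral>\<^sup>+\<omega>'. f (case_nat (\<omega> 0) \<omega>') \<partial>noise_seq r) \<partial>noise_seq r)"
    using sigma_finite_measure.nn_integral_fst[OF sigma_finite_noise_seq mf] by simp
  finally show "(\<integral>\<^sup>+\<omega>. f \<omega> \<partial>noise_seq r)
                  = (\<integral>\<^sup>+\<omega>. (\<integral>\<^sup>+\<omega>'. f (case_nat (\<omega> 0) \<omega>') \<partial>noise_seq r) \<partial>noise_seq r)" .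
  show "(\<lambda>\<omega>. \<integral>\<^sup>+\<omega>'. f (case_nat (\<omega> 0) \<omega>') \<partial>noise_seq r) \<in> borel_measurable (noise_seq r)"
    using sigma_finite_measure.borel_measurable_nn_integral_fst[OF sigma_finite_noise_seq mf] by simp
qed

lemma space_noise_seq_component:
  "\<omega> \<in> space (noise_seq r) \<Longrightarrow> \<omega> i \<in> space (noise r)"
  unfolding noise_seq_def by (auto simp: space_PiM)

lemma distr_noise_seq_0: "distr (noise_seq r) (noise r) (\<lambda>\<omega>. \<omega> 0) = noise r"
  unfolding noise_seq_def by (rule distr_PiM_component) (auto intro: prob_space_noise)

lemma nn_integral_noise_seq_split_le:
  assumes f: "f \<in> borel_measurable (noise_seq r)" and H: "H \<in> borel_measurable (noise r)"
    and le: "\<And>x. x \<in> space (noise r) \<Longrightarrow> (\<integral>\<^sup>+\<omega>'. f (case_nat x \<omega>') \<partial>noise_seq r) \<le> H x"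
  shows "(\<integral>\<^sup>+\<omega>. f \<omega> \<partial>noise_seq r) \<le> (\<integral>\<^sup>+x. H x \<partial>noise r)"
proof -
  have m0: "(\<lambda>\<omega>. \<omega> 0) \<in> noise_seq r \<rightarrow>\<^sub>M noise r"
    unfolding noise_seq_def by (rule measurable_component_singleton) simp
  have "(\<integral>\<^sup>+\<omega>. f \<omega> \<partial>noise_seq r) = (\<integral>\<^sup>+\<omega>. (\<integral>\<^sup>+\<omega>'. f (case_nat (\<omega> 0) \<omega>') \<partial>noise_seq r) \<partial>noise_seq r)"
    by (rule nn_integral_noise_seq_split(1)[OF f])
  also have "\<dots> \<le> (\<integral>\<^sup>+\<omega>. H (\<omega> 0) \<partial>noise_seq r)"
    by (rule nn_integral_mono) (use le space_noise_seq_component in blast)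
  also have "\<dots> = (\<integral>\<^sup>+x. H x \<partial>distr (noise_seq r) (noise r) (\<lambda>\<omega>. \<omega> 0))"
    by (subst nn_integral_distr[OF m0]) (use H in \<open>simp_all add: measurable_distr_eq1\<close>)
  also have "\<dots> = (\<integral>\<^sup>+x. H x \<partial>noise r)" by (simp add: distr_noise_seq_0)
  finally show ?thesis .
qed

lemma measurable_played_borel:
  "(\<lambda>u. played (p::'a::{finite,linorder} \<Rightarrow> real) u) \<in> borel \<rightarrow>\<^sub>M count_space UNIV"
proof -
  have "(\<lambda>\<omega>. played ((\<lambda>_. p) \<omega>) ((\<lambda>u. u) \<omega>)) \<in> borel \<rightarrow>\<^sub>M count_space UNIV"
    by (rule measurable_played) (rule measurable_const, simp, rule measurable_ident_sets, rule refl)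
  then show ?thesis by simp
qed

lemma measurable_leader_borel:
  "(\<lambda>v. leader (p::'a::{finite,linorder} \<Rightarrow> real) v) \<in> borel \<rightarrow>\<^sub>M count_space UNIV"
proof -
  have "(\<lambda>\<omega>. leader ((\<lambda>_. p) \<omega>) ((\<lambda>u. u) \<omega>)) \<in> borel \<rightarrow>\<^sub>M count_space UNIV"
    by (rule measurable_leader) (rule measurable_const, simp, rule measurable_ident_sets, rule refl)
  then show ?thesis by simp
qed

lemma played_sets_borel:
  "{u. played (p::'a::{finite,linorder} \<Rightarrow> real) u = b} \<in> sets borel"
proof -
  have "(\<lambda>u. played p u) -` {b} \<inter> space borel \<in> sets borel"
    by (rule measurable_sets[OF measurable_played_borel]) simp
  then show ?thesis by (simp add: vimage_def)
qed

lemma sum_atMost_split: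
  "(\<Sum>x\<in>{..b}. p x) = (\<Sum>x\<in>{..<b}. p x) + (p (b::'a::{finite,linorder}) :: real)"
proof -
  have "{..b} = insert b {..<b}" by auto
  then show ?thesis by (simp add: add.commute)
qed

lemma atMost_Max_lessThan:
  assumes "c = Max {..<b}" "{..<b} \<noteq> {}"
  shows "{..c} = {..<(b::'a::{finite,linorder})}"
proof -
  have cin: "c \<in> {..<b}" using assms Max_in[of "{..<b}"] by simp
  show ?thesis
  proof (intro set_eqI iffI)
    fix x assume "x \<in> {..c}" then show "x \<in> {..<b}" using cin by auto
  next
    fix x assume "x \<in> {..<b}" then show "x \<in> {..c}" using assms by (auto intro: Max_ge)
  qed
qed

lemma played_interval:
  assumes p: "prob_vector p" and u: "0 \<le> u" "u \<le> 1" and pl: "played p u = b"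
  shows "(\<Sum>x\<in>{..b}. p x) - p b \<le> u \<and> u \<le> (\<Sum>x\<in>{..b}. p x)"
proof -
  have pos: "\<And>x. 0 \<le> p x" using prob_vector_pos[OF p] less_imp_le by blast
  from pl[unfolded played_eq] show ?thesis
  proof (elim disjE conjE)
    assume ex: "\<exists>a. u < (\<Sum>x\<in>{..a}. p x)" and lt: "u < (\<Sum>x\<in>{..b}. p x)"
      and nl: "\<forall>c. c < b \<longrightarrow> \<not> u < (\<Sum>x\<in>{..c}. p x)"
    have "(\<Sum>x\<in>{..<b}. p x) \<le> u"
    proof (cases "{..<b} = {}")
      case True then show ?thesis using u by simp
    next
      case False
      define c where "c = Max {..<b}"
      have "c < b" using Max_in[of "{..<b}"] False unfolding c_def by auto
      then have "\<not> u < (\<Sum>x\<in>{..c}. p x)" using nl by blast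
      then show ?thesis using atMost_Max_lessThan[OF c_def False] by simp
    qed
    then show ?thesis using lt sum_atMost_split[of p b] by simp
  next
    assume nex: "\<not> (\<exists>a. u < (\<Sum>x\<in>{..a}. p x))" and bm: "b = Max UNIV"
    have "{..b} = UNIV" using bm by (auto intro: Max_ge)
    then have "(\<Sum>x\<in>{..b}. p x) = 1" using prob_vector_sum[OF p] by simp
    moreover have "\<not> u < (\<Sum>x\<in>{..b}. p x)" using nex by blast
    ultimately show ?thesis using u pos[of b] by simp
  qed
qed

lemma emeasure_played_le:
  assumes p: "prob_vector p" shows "emeasure unif01 {u. played p u = b} \<le> ennreal (p b)"
proof -
  define c where "c = (\<Sum>x\<in>{..b}. p x)"
  have sub: "{0..1} \<inter> {u. played p u = b} \<subseteq> {c - p b..c}"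
    using played_interval[OF p] unfolding c_def by auto
  have "emeasure unif01 {u. played p u = b} = emeasure lborel ({0..1} \<inter> {u. played p u = b})"
    using played_sets_borel[of p b] by (simp add: sets_lborel divide_ennreal_def)
  also have "\<dots> \<le> emeasure lborel {c - p b..c}"
    by (rule emeasure_mono[OF sub]) simp
  also have "\<dots> = ennreal (p b)" using prob_vector_pos[OF p, of b] by simp
  finally show ?thesis .
qed

lemma nn_integral_rewards_indicator:
  fixes r :: "'a::{finite,linorder} \<Rightarrow> real"
  assumes r: "0 \<le> r b" "r b \<le> 1" and c: "0 \<le> c1" "0 \<le> c0"
  shows "(\<integral>\<^sup>+R. ennreal (if R b then c1 else c0) \<partial>rewards r) = ennreal (r b * c1 + (1 - r b) * c0)"
proof -
  have "(\<integral>\<^sup>+R. ennreal (if R b then c1 else c0) \<partial>rewards r)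
     = (\<integral>\<^sup>+y. ennreal (if y then c1 else c0) \<partial>measure_pmf (map_pmf (\<lambda>R. R b) (Pi_pmf UNIV False (\<lambda>a. bernoulli_pmf (r a)))))"
    by (simp add: nn_integral_map_pmf)
  also have "map_pmf (\<lambda>R. R b) (Pi_pmf UNIV False (\<lambda>a. bernoulli_pmf (r a))) = bernoulli_pmf (r b)"
    by (simp add: Pi_pmf_component)
  also have "(\<integral>\<^sup>+y. ennreal (if y then c1 else c0) \<partial>measure_pmf (bernoulli_pmf (r b)))
      = (\<Sum>y\<in>UNIV. ennreal (if y then c1 else c0) * ennreal (pmf (bernoulli_pmf (r b)) y))"
    by (rule nn_integral_measure_pmf_support) auto
  also have "\<dots> = ennreal c1 * ennreal (r b) + ennreal c0 * ennreal (1 - r b)"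
    using r by (simp add: UNIV_bool)
  also have "\<dots> = ennreal (r b * c1 + (1 - r b) * c0)"
    using r c by (simp add: ennreal_mult[symmetric] ennreal_plus[symmetric] mult.commute del: ennreal_plus)
  finally show ?thesis .
qed

lemma nn_integral_pair_measure_mult:
  assumes M1: "sigma_finite_measure M1" and M2: "sigma_finite_measure M2"
    and f: "f \<in> borel_measurable M1" and g: "g \<in> borel_measurable M2"
  shows "(\<integral>\<^sup>+z. f (fst z) * g (snd z) \<partial>(M1 \<Otimes>\<^sub>M M2)) = (\<integral>\<^sup>+x. f x \<partial>M1) * (\<integral>\<^sup>+y. g y \<partial>M2)"
proof -
  have m: "(\<lambda>z. f (fst z) * g (snd z)) \<in> borel_measurable (M1 \<Otimes>\<^sub>M M2)"
    using f g by measurable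
  have "(\<integral>\<^sup>+z. f (fst z) * g (snd z) \<partial>(M1 \<Otimes>\<^sub>M M2)) = (\<integral>\<^sup>+x. \<integral>\<^sup>+y. f x * g y \<partial>M2 \<partial>M1)"
    using sigma_finite_measure.nn_integral_fst[OF M2 m] by simp
  also have "\<dots> = (\<integral>\<^sup>+x. f x * (\<integral>\<^sup>+y. g y \<partial>M2) \<partial>M1)"
    by (rule nn_integral_cong) (simp add: nn_integral_cmult[OF g])
  also have "\<dots> = (\<integral>\<^sup>+x. f x \<partial>M1) * (\<integral>\<^sup>+y. g y \<partial>M2)"
    by (rule nn_integral_multc[OF f])
  finally show ?thesis .
qed

lemma measurable_from_unif01_eq: "measurable unif01 N = measurable borel N"
  by (rule measurable_cong_sets) simp_all

lemma measurable_from_rewards_eq: "measurable (rewards r) N = measurable (count_space UNIV) N"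
  by (rule measurable_cong_sets) simp_all

lemma measurable_leader_reward:
  fixes r :: "'a::{finite,linorder} \<Rightarrow> real" and f :: "'a \<Rightarrow> bool \<Rightarrow> ennreal"
  shows "(\<lambda>z. f (leader p (fst z)) (snd z b)) \<in> borel_measurable (unif01 \<Otimes>\<^sub>M rewards r)"
proof -
  have leader: "(\<lambda>z. leader p (fst z)) \<in> unif01 \<Otimes>\<^sub>M rewards r \<rightarrow>\<^sub>M count_space UNIV"
    using measurable_compose[OF measurable_fst[of unif01 "rewards r"] measurable_leader_borel[of p, folded measurable_from_unif01_eq]]
    by (simp add: comp_def)
  have "(\<lambda>R::'a \<Rightarrow> bool. R b) \<in> rewards r \<rightarrow>\<^sub>M count_space UNIV"
    unfolding measurable_from_rewards_eq by simp
  from measurable_compose[OF measurable_snd[of unif01 "rewards r"] this]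
  have "(\<lambda>z. snd z b) \<in> unif01 \<Otimes>\<^sub>M rewards r \<rightarrow>\<^sub>M count_space UNIV"
    by (simp add: comp_def)
  then have "(\<lambda>z. f s (snd z b)) \<in> borel_measurable (unif01 \<Otimes>\<^sub>M rewards r)" for s
    using measurable_compose[of "\<lambda>z. snd z b" _ "count_space UNIV" "f s"] by simp
  then show ?thesis
    by (rule measurable_compose_countable'[OF _ leader]) simp
qed

lemma nn_integral_leader_reward:
  fixes r p :: "'a::{finite,linorder} \<Rightarrow> real"
  assumes r: "0 \<le> r b" "r b \<le> 1" and nonneg: "\<And>v. 0 \<le> g (leader p v)" "0 \<le> c"
  shows "(\<integral>\<^sup>+z. ennreal (if snd z b then g (leader p (fst z)) else c) \<partial>(unif01 \<Otimes>\<^sub>M rewards r))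
           = (\<integral>\<^sup>+v. ennreal (r b * g (leader p v) + (1 - r b) * c) \<partial>unif01)"
proof -
  have sf: "sigma_finite_measure (rewards r)"
    by (rule prob_space_imp_sigma_finite) (rule prob_space_measure_pmf)
  have "(\<lambda>z. ennreal (if snd z b then g (leader p (fst z)) else c))
          \<in> borel_measurable (unif01 \<Otimes>\<^sub>M rewards r)"
    using measurable_leader_reward[where f="\<lambda>s y. ennreal (if y then g s else c)" and p=p and b=b and r=r]
    by simp
  from sigma_finite_measure.nn_integral_fst[OF sf this, symmetric]
  have "(\<integral>\<^sup>+z. ennreal (if snd z b then g (leader p (fst z)) else c) \<partial>(unif01 \<Otimes>\<^sub>M rewards r))
          = (\<integral>\<^sup>+v. \<integral>\<^sup>+R. ennreal (if R b then g (leader p v) else c) \<partial>rewards r \<partial>unif01)"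
    unfolding fst_conv snd_conv .
  also have "\<dots> = (\<integral>\<^sup>+v. ennreal (r b * g (leader p v) + (1 - r b) * c) \<partial>unif01)"
    using nn_integral_rewards_indicator[where r=r and b=b, OF r nonneg(1) nonneg(2)] by simp
  finally show ?thesis .
qed

lemma nn_integral_noise_played_le:
  fixes r :: "'a::{finite,linorder} \<Rightarrow> real"
  assumes p: "prob_vector p" and \<Psi>: "\<And>b. \<Psi> b \<in> borel_measurable (unif01 \<Otimes>\<^sub>M rewards r)"
  shows "(\<integral>\<^sup>+x. \<Psi> (played p (fst x)) (snd x) \<partial>noise r)
         \<le> (\<Sum>b\<in>UNIV. ennreal (p b) * (\<integral>\<^sup>+z. \<Psi> b z \<partial>(unif01 \<Otimes>\<^sub>M rewards r)))"
proof -
  have sf: "sigma_finite_measure unif01" "sigma_finite_measure (unif01 \<Otimes>\<^sub>M rewards r)"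
    using prob_space_unif01 prob_space_pair[OF prob_space_unif01 prob_space_measure_pmf]
    by (auto intro: prob_space_imp_sigma_finite)
  have I: "indicator {u. played p u = b} \<in> borel_measurable unif01" for b
    by (rule borel_measurable_indicator) (simp add: played_sets_borel)
  have "(\<integral>\<^sup>+x. \<Psi> (played p (fst x)) (snd x) \<partial>noise r)
      = (\<integral>\<^sup>+x. (\<Sum>b\<in>UNIV. indicator {u. played p u = b} (fst x) * \<Psi> b (snd x)) \<partial>noise r)"
    by (intro nn_integral_cong) (simp add: indicator_def if_distrib)
  also have "\<dots> = (\<Sum>b\<in>UNIV. \<integral>\<^sup>+x. indicator {u. played p u = b} (fst x) * \<Psi> b (snd x) \<partial>noise r)"
  proof (rule nn_integral_sum)
    fix b
    have "(\<lambda>x. indicator {u. played p u = b} (fst x) * \<Psi> b (snd x))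
        \<in> borel_measurable (unif01 \<Otimes>\<^sub>M (unif01 \<Otimes>\<^sub>M rewards r))"
      using I \<Psi> by measurable
    then show "(\<lambda>x. indicator {u. played p u = b} (fst x) * \<Psi> b (snd x))
                 \<in> borel_measurable (noise r)"
      unfolding noise_def .
  qed
  also have "\<dots> = (\<Sum>b\<in>UNIV. emeasure unif01 {u. played p u
                = b} * (\<integral>\<^sup>+z. \<Psi> b z \<partial>(unif01 \<Otimes>\<^sub>M rewards r)))"
    unfolding noise_def nn_integral_pair_measure_mult[OF sf I \<Psi>]
    by (simp add: played_sets_borel)
  also have "\<dots> \<le> (\<Sum>b\<in>UNIV. ennreal (p b) * (\<integral>\<^sup>+z. \<Psi> b z \<partial>(unif01 \<Otimes>\<^sub>M rewards r)))"
    by (intro sum_mono mult_right_mono emeasure_played_le[OF p]) simp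
  finally show ?thesis .
qed

lemma nn_integral_update_le:
  fixes r :: "'a::{finite,linorder} \<Rightarrow> real" and G :: "('a \<Rightarrow> real) \<Rightarrow> real"
  assumes r: "\<And>a. 0 \<le> r a" "\<And>a. r a \<le> 1" and p: "prob_vector p"
    and G: "\<And>p. prob_vector p \<Longrightarrow> 0 \<le> G p" and \<beta>: "0 \<le> \<beta>" "\<beta> \<le> 1"
    and K: "\<And>s. s \<in> argmax_set p \<Longrightarrow>
      (\<Sum>b\<in>UNIV. p b * (r b * G (samba_jump (samba_rate \<beta>) p s b) + (1 - r b) * G p)) \<le> K"
  shows "(\<integral>\<^sup>+x. ennreal (G (samba_update \<beta> p x)) \<partial>noise r) \<le> ennreal K"
proof -
  define g where "g b s = G (samba_jump (samba_rate \<beta>) p s b)" for b s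
  define \<Psi> where "\<Psi> b z = ennreal (if snd z b then g b (leader p (fst z)) else G p)"
    for b and z :: "real \<times> ('a \<Rightarrow> bool)"
  define \<phi> where "\<phi> b v = r b * g b (leader p v) + (1 - r b) * G p" for b v
  have g: "0 \<le> g b (leader p v)" for b v
    unfolding g_def by (rule G[OF prob_vector_jump[OF p leader_in_argmax_set \<beta>]])
  have \<phi>: "0 \<le> \<phi> b v" for b v
    unfolding \<phi>_def using r[of b] g G[OF p] by simp
  have \<Psi>_measurable: "\<Psi> b \<in> borel_measurable (unif01 \<Otimes>\<^sub>M rewards r)" for b
    using measurable_leader_reward[where f="\<lambda>s y. ennreal (if y then g b s else G p)" and p=p and b=b and r=r]
    unfolding \<Psi>_def by simp
  have \<Psi>_integral: "(\<integral>\<^sup>+z. \<Psi> b z \<partial>(unif01 \<Otimes>\<^sub>M rewards r)) = (\<integral>\<^sup>+v. ennreal (\<phi> b v) \<partial>unif01)" for b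
    unfolding \<Psi>_def \<phi>_def
    by (rule nn_integral_leader_reward[where r=r and b=b and g="g b" and p=p, OF r(1) r(2) g G[OF p]])
  have [measurable]: "(\<lambda>v. \<phi> b v) \<in> borel_measurable unif01" for b
    using measurable_leader_borel[of p] unfolding \<phi>_def measurable_from_unif01_eq by measurable
  have "(\<integral>\<^sup>+x. ennreal (G (samba_update \<beta> p x)) \<partial>noise r)
          = (\<integral>\<^sup>+x. \<Psi> (played p (fst x)) (snd x) \<partial>noise r)"
    by (intro nn_integral_cong) (auto simp: samba_update_eq[OF p] \<Psi>_def g_def split: prod.split)
  also have "\<dots> \<le> (\<Sum>b\<in>UNIV. ennreal (p b) * (\<integral>\<^sup>+v. ennreal (\<phi> b v) \<partial>unif01))"
    using nn_integral_noise_played_le[OF p \<Psi>_measurable] by (simp add: \<Psi>_integral)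
  also have "\<dots> = (\<Sum>b\<in>UNIV. \<integral>\<^sup>+v. ennreal (p b * \<phi> b v) \<partial>unif01)"
    using prob_vector_pos[OF p] \<phi>
    by (subst nn_integral_cmult[symmetric]) (auto simp: ennreal_mult less_imp_le)
  also have "\<dots> = (\<integral>\<^sup>+v. (\<Sum>b\<in>UNIV. ennreal (p b * \<phi> b v)) \<partial>unif01)"
    by (rule nn_integral_sum[symmetric]) measurable
  also have "\<dots> = (\<integral>\<^sup>+v. ennreal (\<Sum>b\<in>UNIV. p b * \<phi> b v) \<partial>unif01)"
    using prob_vector_pos[OF p] \<phi> by (intro nn_integral_cong sum_ennreal) (simp add: less_imp_le)
  also have "\<dots> \<le> (\<integral>\<^sup>+v. ennreal K \<partial>unif01)"
    using K[OF leader_in_argmax_set] unfolding \<phi>_def g_def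
    by (intro nn_integral_mono ennreal_leI) simp
  also have "\<dots> = ennreal K" using prob_space.emeasure_space_1[OF prob_space_unif01] by simp
  finally show ?thesis .
qed

section \<open>Upcrossings of 1/2\<close>

definition upcrossings :: "(nat \<Rightarrow> real) \<Rightarrow> nat \<Rightarrow> nat" where
  "upcrossings q n = (\<Sum>t<n. if q t < 1/2 \<and> 1/2 \<le> q (Suc t) then 1 else 0)"

lemma upcrossings_0 [simp]: "upcrossings q 0 = 0"
  by (simp add: upcrossings_def)

lemma upcrossings_Suc:
  "upcrossings q (Suc n) = upcrossings q n + (if q n < 1/2 \<and> 1/2 \<le> q (Suc n) then 1 else 0)"
  by (simp add: upcrossings_def)

lemma upcrossings_Suc_shift:
  "upcrossings q (Suc n) = (if q 0 < 1/2 \<and> 1/2 \<le> q 1 then 1 else 0) + upcrossings (\<lambda>t. q (Suc t)) n"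
  unfolding upcrossings_def sum.lessThan_Suc_shift by simp

lemma upcrossings_mono: "m \<le> n \<Longrightarrow> upcrossings q m \<le> upcrossings q n"
  unfolding upcrossings_def by (rule sum_mono2) auto

lemma upcrossings_const:
  assumes "m \<le> n" and "\<And>t. m \<le> t \<Longrightarrow> t < n \<Longrightarrow> \<not> (q t < 1/2 \<and> 1/2 \<le> q (Suc t))"
  shows "upcrossings q n = upcrossings q m"
  using assms by (induction n) (auto simp: upcrossings_Suc le_Suc_eq)

lemma upcrossings_le_const:
  assumes "\<And>t. m \<le> t \<Longrightarrow> \<not> (q t < 1/2 \<and> 1/2 \<le> q (Suc t))"
  shows "upcrossings q n \<le> upcrossings q m"
proof (cases "n \<le> m")
  case True
  then show ?thesis by (rule upcrossings_mono)
next
  case False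
  then show ?thesis using upcrossings_const[of m n q] assms by simp
qed

lemma hit_eq_enat:
  "hit P (enat m) = enat t \<longleftrightarrow> m \<le> t \<and> P t \<and> (\<forall>u. m \<le> u \<and> u < t \<longrightarrow> \<not> P u)"
proof
  assume hit: "hit P (enat m) = enat t"
  then have ex: "\<exists>u\<ge>m. P u" unfolding hit_def by (auto split: if_splits)
  with hit have t: "t = (LEAST u. m \<le> u \<and> P u)" by (simp add: hit_def)
  have "m \<le> t \<and> P t" unfolding t using LeastI_ex[of "\<lambda>u. m \<le> u \<and> P u"] ex
    by blast
  moreover have "\<not> P u" if "m \<le> u" "u < t" for u
    using not_less_Least[of u "\<lambda>u. m \<le> u \<and> P u"] that unfolding t by blast
  ultimately show "m \<le> t \<and> P t \<and> (\<forall>u. m \<le> u \<and> u < t \<longrightarrow> \<not> P u)"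
    by blast
next
  assume t: "m \<le> t \<and> P t \<and> (\<forall>u. m \<le> u \<and> u < t \<longrightarrow> \<not> P u)"
  then have "(LEAST u. m \<le> u \<and> P u) = t"
    by (intro Least_equality) (auto simp: not_le[symmetric])
  moreover have "\<exists>u\<ge>m. P u" using t by blast
  ultimately show "hit P (enat m) = enat t" by (simp add: hit_def)
qed

lemma hit_eq_infinity:
  "hit P (enat m) = \<infinity> \<longleftrightarrow> (\<forall>t\<ge>m. \<not> P t)"
  by (simp add: hit_def)

lemma hit_cases:
  obtains "hit P (enat m) = \<infinity>" "\<forall>t\<ge>m. \<not> P t"
  | t where "hit P (enat m) = enat t" "m \<le> t" "P t" "\<forall>u. m \<le> u \<and> u < t \<longrightarrow> \<not> P u"
  using hit_eq_enat[of P m] hit_eq_infinity[of P m] by (cases "hit P (enat m)") auto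

lemma sigma_k_upcrossings:
  "(\<forall>m. sigma_k q k = enat m \<longrightarrow> upcrossings q m = k)
   \<and> (sigma_k q k = \<infinity> \<longrightarrow> (\<forall>n. upcrossings q n < k))"
proof (induction k)
  case 0
  then show ?case by (simp add: sigma_k_def zero_enat_def)
next
  case (Suc k)
  have sigma: "sigma_k q (Suc k) = hit (\<lambda>t. 1/2 \<le> q t) (hit (\<lambda>t. q t < 1/2) (sigma_k q k))"
    by (simp add: sigma_k_def Let_def)
  show ?case
  proof (cases "sigma_k q k")
    case infinity
    with Suc.IH show ?thesis by (simp add: sigma hit_def less_Suc_eq)
  next
    case (enat m)
    with Suc.IH have k: "upcrossings q m = k" by simp
    show ?thesis
    proof (cases rule: hit_cases[of "\<lambda>t. q t < 1/2" m])
      case 1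
      then have "upcrossings q n \<le> k" for n
        using upcrossings_le_const[of m q n] k by auto
      then show ?thesis using 1 enat by (simp add: sigma hit_def less_Suc_eq_le)
    next
      case (2 t1)
      have k1: "upcrossings q t1 = k"
        using upcrossings_const[of m t1 q] 2 k by auto
      show ?thesis
      proof (cases rule: hit_cases[of "\<lambda>t. 1/2 \<le> q t" t1])
        case 1
        then have "upcrossings q n \<le> k" for n
          using upcrossings_le_const[of t1 q n] k1 by auto
        then show ?thesis using 1 2 enat by (simp add: sigma less_Suc_eq_le)
      next
        case (2 t2)
        then obtain t3 where t3: "t2 = Suc t3" "t1 \<le> t3"
          using \<open>q t1 < 1/2\<close>
          by (metis Suc_le_eq le_neq_implies_less less_imp_Suc_add not_le le_add1 add_Suc_right)
        have "upcrossings q t3 = k"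
          using upcrossings_const[of t1 t3 q] 2 t3 k1 by (auto simp: not_le)
        moreover have "q t3 < 1/2" using 2 t3 by (cases "t1 = t3") auto
        ultimately have "upcrossings q t2 = Suc k" using t3 2 by (simp add: upcrossings_Suc)
        then show ?thesis using 2 \<open>hit _ (enat m) = enat t1\<close> enat by (simp add: sigma)
      qed
    qed
  qed
qed

lemma sigma_k_finite_iff:
  "sigma_k q k < \<infinity> \<longleftrightarrow> (\<exists>n. k \<le> upcrossings q n)"
  using sigma_k_upcrossings[of q k] by (cases "sigma_k q k") (auto simp: not_le[symmetric])

lemma AE_tendsto_0_if_eventually_less:
  fixes f :: "'b \<Rightarrow> nat \<Rightarrow> real"
  assumes ev: "\<And>e. 0 < e \<Longrightarrow> e \<le> c \<Longrightarrow> AE x in M. eventually (\<lambda>t. f x t < e) sequentially"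
    and c: "0 < c" and nonneg: "\<And>x t. 0 \<le> f x t"
  shows "AE x in M. f x \<longlonglongrightarrow> 0"
proof -
  have "AE x in M. \<forall>n. eventually (\<lambda>t. f x t < c / Suc n) sequentially"
    unfolding AE_all_countable
  proof
    fix n :: nat
    have "c / Suc n \<le> c" using c by (simp add: divide_le_eq)
    then show "AE x in M. eventually (\<lambda>t. f x t < c / Suc n) sequentially"
      using c by (intro ev) simp_all
  qed
  then show ?thesis
  proof (rule AE_mp, intro AE_I2 impI order_tendstoI)
    fix x and a :: real
    assume small: "\<forall>n. eventually (\<lambda>t. f x t < c / Suc n) sequentially" and "0 < a"
    obtain n where "inverse (real (Suc n)) < a / c"
      using reals_Archimedean[of "a / c"] c \<open>0 < a\<close> by auto
    then have "c / Suc n < a"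
      using c by (simp add: divide_simps mult.commute)
    then show "eventually (\<lambda>t. f x t < a) sequentially"
      using small[rule_format, of n] by (elim eventually_mono) simp
  next
    fix x and a :: real
    assume "a < 0"
    then show "eventually (\<lambda>t. a < f x t) sequentially"
      using nonneg by (intro always_eventually allI) (rule less_le_trans)
  qed
qed

context samba_bandit begin

abbreviation "Paths \<equiv> noise_seq r"

definition q_path :: "('a \<Rightarrow> real) \<Rightarrow> (nat \<Rightarrow> real \<times> real \<times> ('a \<Rightarrow> bool)) \<Rightarrow> nat \<Rightarrow> real" where
  "q_path p \<omega> t = 1 - samba (samba_rate \<beta>) p \<omega> t astar"

definition upcrossing_step :: "('a \<Rightarrow> real) \<Rightarrow> ('a \<Rightarrow> real) \<Rightarrow> nat" where
  "upcrossing_step p p' = (if 1 - p astar < 1/2 \<and> 1/2 \<le> 1 - p' astar then 1 else 0)"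

(* Instead of stopping times, the argument counts upcrossings of 1/2 up to time n and conditions
   on the first noise variable; the remaining noise is again distributed as noise_seq r. *)
definition prob_upcrossings :: "('a \<Rightarrow> real) \<Rightarrow> nat \<Rightarrow> nat \<Rightarrow> ennreal" where
  "prob_upcrossings p n k = (\<integral>\<^sup>+\<omega>. (if k \<le> upcrossings (q_path p \<omega>) n then 1 else 0) \<partial>Paths)"

definition prob_upcrossings_after ::
    "('a \<Rightarrow> real) \<Rightarrow> nat \<Rightarrow> nat \<Rightarrow> real \<times> real \<times> ('a \<Rightarrow> bool) \<Rightarrow> ennreal" where
  "prob_upcrossings_after p n k x =
     prob_upcrossings (samba_update \<beta> p x) n (k - upcrossing_step p (samba_update \<beta> p x))"

lemma measurable_q_path[measurable]:
  "(\<lambda>\<omega>. q_path p \<omega> t) \<in> borel_measurable Paths"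
  unfolding q_path_def using measurable_samba[of \<beta> p t astar r] by measurable

lemma measurable_upcrossings_indicator:
  "(\<lambda>\<omega>. if k \<le> upcrossings (q_path p \<omega>) n then 1 else 0 :: ennreal) \<in> borel_measurable Paths"
  unfolding upcrossings_def by measurable

lemma q_path_0: "q_path p \<omega> 0 = 1 - p astar" by (simp add: q_path_def)

lemma q_path_shift:
  "q_path p (case_nat x \<omega>) (Suc t) = q_path (samba_update \<beta> p x) \<omega> t"
  unfolding q_path_def by (simp add: samba_shift del: samba.simps(2))

lemma upcrossings_q_path_shift:
  "upcrossings (q_path p (case_nat x \<omega>)) (Suc n)
     = upcrossing_step p (samba_update \<beta> p x) + upcrossings (q_path (samba_update \<beta> p x) \<omega>) n"
proof -
  have "q_path p (case_nat x \<omega>) (Suc 0) = 1 - samba_update \<beta> p x astar"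
    using q_path_shift[of p x \<omega> 0] by (simp add: q_path_def)
  then show ?thesis unfolding upcrossings_Suc_shift[of _ n] upcrossing_step_def
    by (simp add: q_path_0 q_path_shift)
qed

lemma prob_space_paths: "prob_space Paths" by (rule prob_space_noise_seq)

lemma prob_upcrossings_le_1: "prob_upcrossings p n k \<le> 1"
proof -
  have "prob_upcrossings p n k \<le> (\<integral>\<^sup>+\<omega>. 1 \<partial>Paths)"
    unfolding prob_upcrossings_def by (intro nn_integral_mono) auto
  also have "\<dots> = 1" using prob_space.emeasure_space_1[OF prob_space_paths] by simp
  finally show ?thesis .
qed

lemma prob_upcrossings_0: "prob_upcrossings p n 0 = 1"
  unfolding prob_upcrossings_def using prob_space.emeasure_space_1[OF prob_space_paths] by simp

lemma prob_upcrossings_time_0: "prob_upcrossings p 0 (Suc k) = 0"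
  unfolding prob_upcrossings_def by simp

lemma prob_upcrossings_shift: "(\<integral>\<^sup>+\<omega>'. (if k \<le> upcrossings (q_path p (case_nat x \<omega>')) (Suc n) then 1 else 0) \<partial>Paths)
   = prob_upcrossings_after p n k x"
  unfolding prob_upcrossings_after_def prob_upcrossings_def upcrossings_q_path_shift
  by (intro nn_integral_cong) auto

lemma prob_upcrossings_Suc:
  "prob_upcrossings p (Suc n) k = (\<integral>\<^sup>+\<omega>. prob_upcrossings_after p n k (\<omega> 0) \<partial>Paths)"
  and measurable_prob_upcrossings_after:
  "(\<lambda>\<omega>. prob_upcrossings_after p n k (\<omega> 0)) \<in> borel_measurable Paths"
  using nn_integral_noise_seq_split[OF measurable_upcrossings_indicator[of k p "Suc n"]]
  unfolding prob_upcrossings_shift prob_upcrossings_def[of p "Suc n" k] by auto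

lemma prob_upcrossings_Suc_le:
  assumes H: "H \<in> borel_measurable (noise r)"
    and le: "\<And>x. x \<in> space (noise r) \<Longrightarrow> prob_upcrossings_after p n k x \<le> H x"
  shows "prob_upcrossings p (Suc n) k \<le> (\<integral>\<^sup>+x. H x \<partial>noise r)"
  unfolding prob_upcrossings_def[of p "Suc n" k]
  by (rule nn_integral_noise_seq_split_le[OF measurable_upcrossings_indicator H]) (use le in \<open>simp add: prob_upcrossings_shift\<close>)

lemma measurable_samba_update_optimal:
  "(\<lambda>x. samba_update \<beta> p x astar) \<in> borel_measurable (noise r)"
  using measurable_samba_update[of "\<lambda>_. p" "noise r" "\<lambda>x. x" r \<beta> astar] by simp

lemma nn_integral_update_le_step_mean:
  assumes p: "prob_vector p" and G0: "\<And>p'. prob_vector p' \<Longrightarrow> 0 \<le> G p'"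
    and K: "\<And>s. s \<in> argmax_set p \<Longrightarrow> step_mean G p s \<le> K"
  shows "(\<integral>\<^sup>+x. ennreal (G (samba_update \<beta> p x)) \<partial>noise r) \<le> ennreal K"
  by (rule nn_integral_update_le[OF r0 r1 p G0 _ _ K[unfolded step_mean_def]]) (use beta in auto)

lemma prob_upcrossing_le_twice_q:
  assumes "prob_vector p" "1 - p astar < 1/2"
  shows "prob_upcrossings p n 1 \<le> ennreal (2 * (1 - p astar))"
  using assms
proof (induction n arbitrary: p)
  case 0
  then show ?case using prob_upcrossings_time_0[of p 0] by simp
next
  case (Suc n)
  have "prob_upcrossings p (Suc n) 1
          \<le> (\<integral>\<^sup>+x. ennreal (2 * (1 - samba_update \<beta> p x astar)) \<partial>noise r)"
  proof (rule prob_upcrossings_Suc_le)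
    show "(\<lambda>x. ennreal (2 * (1 - samba_update \<beta> p x astar))) \<in> borel_measurable (noise r)"
      using measurable_samba_update_optimal[of p] by measurable
    fix x
    define p' where "p' = samba_update \<beta> p x"
    have pv: "prob_vector p'" unfolding p'_def using prob_vector_update[OF Suc.prems(1)] beta by simp
    show "prob_upcrossings_after p n 1 x \<le> ennreal (2 * (1 - samba_update \<beta> p x astar))"
    proof (cases "1/2 \<le> 1 - p' astar")
      case True
      then have "upcrossing_step p p' = 1" using Suc.prems(2) by (simp add: upcrossing_step_def)
      then show ?thesis unfolding prob_upcrossings_after_def p'_def[symmetric] using True prob_upcrossings_0
        by (simp add: ennreal_ge_1)
    next
      case False
      then have "upcrossing_step p p' = 0" by (simp add: upcrossing_step_def)
      then show ?thesis unfolding prob_upcrossings_after_def p'_def[symmetric] using Suc.IH[OF pv] False by simp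
    qed
  qed
  also have "\<dots> \<le> ennreal (2 * (1 - p astar))"
  proof (rule nn_integral_update_le_step_mean[OF Suc.prems(1), where G="\<lambda>p. 2 * (1 - p astar)"])
    show "\<And>p'. prob_vector p' \<Longrightarrow> 0 \<le> 2 * (1 - p' astar)" using prob_vector_le_1
      by simp
    show "\<And>s. s \<in> argmax_set p \<Longrightarrow> step_mean (\<lambda>p. 2 * (1 - p astar)) p s \<le> 2 * (1 - p astar)"
      by (rule step_mean_twice_q[OF Suc.prems(1)]) (use Suc.prems(2) in auto)
  qed
  finally show ?case .
qed

lemma prob_upcrossing_le_rho_below:
  assumes "prob_vector p" "1 - p astar < 1/2"
  shows "prob_upcrossings p n 1 \<le> ennreal rho"
proof (cases n)
  case 0
  then show ?thesis using prob_upcrossings_time_0[of p 0] by simp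
next
  case (Suc m)
  have "prob_upcrossings p (Suc m) 1
          \<le> (\<integral>\<^sup>+x. ennreal (min 1 (2 * (1 - samba_update \<beta> p x astar))) \<partial>noise r)"
  proof (rule prob_upcrossings_Suc_le)
    show "(\<lambda>x. ennreal (min 1 (2 * (1 - samba_update \<beta> p x astar)))) \<in> borel_measurable (noise r)"
      using measurable_samba_update_optimal[of p] by measurable
    fix x
    define p' where "p' = samba_update \<beta> p x"
    have pv: "prob_vector p'" unfolding p'_def using prob_vector_update[OF assms(1)] beta by simp
    show "prob_upcrossings_after p m 1 x \<le> ennreal (min 1 (2 * (1 - samba_update \<beta> p x astar)))"
    proof (cases "1/2 \<le> 1 - p' astar")
      case True
      then have "upcrossing_step p p' = 1" using assms(2) by (simp add: upcrossing_step_def)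
      moreover have "min 1 (2 * (1 - p' astar)) = 1" using True by simp
      ultimately show ?thesis unfolding prob_upcrossings_after_def p'_def[symmetric] using prob_upcrossings_0 by simp
    next
      case False
      then have "upcrossing_step p p' = 0" by (simp add: upcrossing_step_def)
      moreover have "prob_upcrossings p' m 1 \<le> ennreal (2 * (1 - p' astar))"
        using prob_upcrossing_le_twice_q[OF pv] False by simp
      moreover have "prob_upcrossings p' m 1 \<le> 1" by (rule prob_upcrossings_le_1)
      ultimately show ?thesis unfolding prob_upcrossings_after_def p'_def[symmetric] by (simp add: min_def)
    qed
  qed
  also have "\<dots> \<le> ennreal rho"
  proof (rule nn_integral_update_le_step_mean[OF assms(1), where G="\<lambda>p. min 1 (2 * (1 - p astar))"])
    show "\<And>p'. prob_vector p' \<Longrightarrow> 0 \<le> min 1 (2 * (1 - p' astar))"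
      using prob_vector_le_1 by simp
    show "\<And>s. s \<in> argmax_set p \<Longrightarrow> step_mean (\<lambda>p. min 1 (2 * (1 - p astar))) p s \<le> rho"
      by (rule step_mean_capped_twice_q[OF assms(1)]) (use assms(2) in auto)
  qed
  finally show ?thesis using Suc by simp
qed

lemma nn_integral_paths_const: "(\<integral>\<^sup>+\<omega>. c \<partial>Paths) = c"
  using prob_space.emeasure_space_1[OF prob_space_paths] by simp

lemma prob_upcrossing_le_rho:
  assumes "prob_vector p"
  shows "prob_upcrossings p n 1 \<le> ennreal rho"
  using assms
proof (induction n arbitrary: p)
  case 0
  then show ?case using prob_upcrossings_time_0[of p 0] by simp
next
  case (Suc n)
  show ?case
  proof (cases "1 - p astar < 1/2")
    case True
    then show ?thesis using prob_upcrossing_le_rho_below[OF Suc.prems] by simp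
  next
    case False
    have "prob_upcrossings p (Suc n) 1 = (\<integral>\<^sup>+\<omega>. prob_upcrossings_after p n 1 (\<omega> 0) \<partial>Paths)"
      by (rule prob_upcrossings_Suc)
    also have "\<dots> \<le> (\<integral>\<^sup>+\<omega>. ennreal rho \<partial>Paths)"
    proof (rule nn_integral_mono)
      fix \<omega>
      have "upcrossing_step p (samba_update \<beta> p (\<omega> 0)) = 0" using False
        by (simp add: upcrossing_step_def)
      then show "prob_upcrossings_after p n 1 (\<omega> 0) \<le> ennreal rho"
        using Suc.IH[OF prob_vector_update[OF Suc.prems]] beta by (simp add: prob_upcrossings_after_def)
    qed
    also have "\<dots> = ennreal rho" by (rule nn_integral_paths_const)
    finally show ?thesis .
  qed
qed

lemma prob_upcrossings_Suc_le_rho: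
  assumes "prob_vector p"
  shows "prob_upcrossings p n (Suc k) \<le> ennreal rho * prob_upcrossings p n k"
  using assms
proof (induction n arbitrary: p k)
  case 0
  then show ?case using prob_upcrossings_time_0[of p k] by simp
next
  case (Suc n)
  show ?case
  proof (cases k)
    case 0
    then show ?thesis
      using prob_upcrossing_le_rho[OF Suc.prems, of "Suc n"] prob_upcrossings_0[of p "Suc n"] by simp
  next
    case (Suc k')
    have "prob_upcrossings p (Suc n) (Suc k)
            = (\<integral>\<^sup>+\<omega>. prob_upcrossings_after p n (Suc k) (\<omega> 0) \<partial>Paths)"
      by (rule prob_upcrossings_Suc)
    also have "\<dots> \<le> (\<integral>\<^sup>+\<omega>. ennreal rho * prob_upcrossings_after p n k (\<omega> 0) \<partial>Paths)"
    proof (rule nn_integral_mono)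
      fix \<omega>
      have c: "upcrossing_step p (samba_update \<beta> p (\<omega> 0)) \<le> 1"
        by (simp add: upcrossing_step_def)
      then have e: "Suc k - upcrossing_step p (samba_update \<beta> p (\<omega> 0))
                      = Suc (k - upcrossing_step p (samba_update \<beta> p (\<omega> 0)))"
        using Suc by simp
      show "prob_upcrossings_after p n (Suc k) (\<omega> 0)
              \<le> ennreal rho * prob_upcrossings_after p n k (\<omega> 0)"
        unfolding prob_upcrossings_after_def e by (rule Suc.IH[OF prob_vector_update[OF Suc.prems]]) (use beta in auto)
    qed
    also have "\<dots> = ennreal rho * (\<integral>\<^sup>+\<omega>. prob_upcrossings_after p n k (\<omega> 0) \<partial>Paths)"
      by (rule nn_integral_cmult[OF measurable_prob_upcrossings_after])
    also have "\<dots> = ennreal rho * prob_upcrossings p (Suc n) k" using prob_upcrossings_Suc[of p n k]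
      by simp
    finally show ?thesis .
  qed
qed

definition lyap_sum :: "real \<Rightarrow> ('a \<Rightarrow> real) \<Rightarrow> nat \<Rightarrow> (nat \<Rightarrow> real \<times> real \<times> ('a \<Rightarrow> bool)) \<Rightarrow> ennreal" where
  "lyap_sum e p T \<omega> = (\<Sum>t<T. if e \<le> q_path p \<omega> t then ennreal drift_gain else 0)
     + ennreal (lyap e (samba (samba_rate \<beta>) p \<omega> T))"

lemma measurable_lyap_update:
  "(\<lambda>x. lyap e (samba_update \<beta> p x)) \<in> borel_measurable (noise r)"
  unfolding lyap_def barrier_def using measurable_samba_update_optimal[of p] by measurable

lemma measurable_lyap_sum: "lyap_sum e p T \<in> borel_measurable Paths"
proof -
  have [measurable]: "(\<lambda>\<omega>. samba (samba_rate \<beta>) p \<omega> T astar) \<in> borel_measurable Paths"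
    by (rule measurable_samba)
  show ?thesis unfolding lyap_sum_def lyap_def barrier_def by measurable
qed

lemma lyap_sum_shift:
  "lyap_sum e p (Suc T) (case_nat x \<omega>)
     = (if e \<le> 1 - p astar then ennreal drift_gain else 0) + lyap_sum e (samba_update \<beta> p x) T \<omega>"
  unfolding lyap_sum_def sum.lessThan_Suc_shift
  by (simp add: q_path_0 q_path_shift samba_shift add.assoc del: samba.simps(2))

lemma step_mean_nonneg:
  assumes p: "prob_vector p" and G0: "\<And>p'. prob_vector p' \<Longrightarrow> 0 \<le> G p'" and s: "s \<in> argmax_set p"
  shows "0 \<le> step_mean G p s"
  unfolding step_mean_def using prob_vector_pos[OF p] r0 r1 G0[OF p] G0[OF prob_vector_jump[OF p s]] beta
  by (intro sum_nonneg mult_nonneg_nonneg add_nonneg_nonneg) (auto intro: less_imp_le)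

lemma nn_integral_lyap_sum_le:
  assumes "prob_vector p" "0 < e" "e \<le> 1/2"
  shows "(\<integral>\<^sup>+\<omega>. lyap_sum e p T \<omega> \<partial>Paths) \<le> ennreal (lyap e p)"
  using assms(1)
proof (induction T arbitrary: p)
  case 0
  then show ?case unfolding lyap_sum_def using nn_integral_paths_const by simp
next
  case (Suc T)
  define c0 where "c0 = (if e \<le> 1 - p astar then drift_gain else 0)"
  have c0e: "(if e \<le> 1 - p astar then ennreal drift_gain else 0) = ennreal c0" unfolding c0_def
    by simp
  have "(\<integral>\<^sup>+\<omega>. lyap_sum e p (Suc T) \<omega> \<partial>Paths)
          \<le> (\<integral>\<^sup>+x. ennreal c0 + ennreal (lyap e (samba_update \<beta> p x)) \<partial>noise r)"
  proof (rule nn_integral_noise_seq_split_le[OF measurable_lyap_sum])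
    show "(\<lambda>x. ennreal c0 + ennreal (lyap e (samba_update \<beta> p x))) \<in> borel_measurable (noise r)"
      using measurable_lyap_update by measurable
    fix x
    have pv: "prob_vector (samba_update \<beta> p x)" using prob_vector_update[OF Suc.prems] beta by simp
    have "(\<integral>\<^sup>+\<omega>'. lyap_sum e p (Suc T) (case_nat x \<omega>') \<partial>Paths)
            = (\<integral>\<^sup>+\<omega>'. ennreal c0 + lyap_sum e (samba_update \<beta> p x) T \<omega>' \<partial>Paths)"
      unfolding lyap_sum_shift c0e ..
    also have "\<dots> = ennreal c0 + (\<integral>\<^sup>+\<omega>'. lyap_sum e (samba_update \<beta> p x) T \<omega>' \<partial>Paths)"
      using prob_space.emeasure_space_1[OF prob_space_paths]
      by (subst nn_integral_add) (auto simp: measurable_lyap_sum)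
    also have "\<dots> \<le> ennreal c0 + ennreal (lyap e (samba_update \<beta> p x))"
      using Suc.IH[OF pv] by (rule add_left_mono)
    finally show "(\<integral>\<^sup>+\<omega>'. lyap_sum e p (Suc T) (case_nat x \<omega>') \<partial>Paths)
                    \<le> ennreal c0 + ennreal (lyap e (samba_update \<beta> p x))" .
  qed
  also have "\<dots> = ennreal c0 + (\<integral>\<^sup>+x. ennreal (lyap e (samba_update \<beta> p x)) \<partial>noise r)"
    using prob_space.emeasure_space_1[OF prob_space_noise[of r]] measurable_lyap_update[of e p]
    by (subst nn_integral_add) auto
  also have "\<dots> \<le> ennreal c0 + ennreal (lyap e p - c0)"
  proof (rule add_left_mono, rule nn_integral_update_le_step_mean[OF Suc.prems])
    show "\<And>p'. prob_vector p' \<Longrightarrow> 0 \<le> lyap e p'" by (rule lyap_nonneg)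
    show "\<And>s. s \<in> argmax_set p \<Longrightarrow> step_mean (lyap e) p s \<le> lyap e p - c0"
      unfolding c0_def by (rule lyap_drift[OF Suc.prems assms(2,3)])
  qed
  also have "\<dots> = ennreal (lyap e p)"
  proof -
    obtain s where s: "s \<in> argmax_set p" using argmax_set_nonempty[of p] by blast
    have "0 \<le> step_mean (lyap e) p s" by (rule step_mean_nonneg[OF Suc.prems lyap_nonneg s])
    then have "0 \<le> lyap e p - c0" using lyap_drift[OF Suc.prems assms(2,3) s] unfolding c0_def
      by linarith
    moreover have "0 \<le> c0" unfolding c0_def using drift_gain_pos by simp
    ultimately show ?thesis by (simp add: ennreal_plus[symmetric] del: ennreal_plus)
  qed
  finally show ?case .
qed

lemma finite_measure_paths: "finite_measure Paths" using prob_space_paths by (simp add: prob_space_def)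

lemma sets_q_path_ge: "{\<omega>\<in>space Paths. e \<le> q_path p \<omega> t} \<in> sets Paths"
  by measurable

lemma sum_prob_q_path_ge_le:
  assumes "prob_vector p" "0 < e" "e \<le> 1/2"
  shows "(\<Sum>t<T. measure Paths {\<omega>\<in>space Paths. e \<le> q_path p \<omega> t}) \<le> lyap e p / drift_gain"
proof -
  have "(\<Sum>t<T. emeasure Paths {\<omega>\<in>space Paths. e \<le> q_path p \<omega> t} * ennreal drift_gain)
      = (\<Sum>t<T. \<integral>\<^sup>+\<omega>. (if e \<le> q_path p \<omega> t then ennreal drift_gain else 0) \<partial>Paths)"
  proof (rule sum.cong[OF refl])
    fix t
    have "(\<integral>\<^sup>+\<omega>. (if e \<le> q_path p \<omega> t then ennreal drift_gain else 0) \<partial>Paths)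
            = (\<integral>\<^sup>+\<omega>. ennreal drift_gain * indicator {\<omega>\<in>space Paths. e \<le> q_path p \<omega> t} \<omega> \<partial>Paths)"
      by (intro nn_integral_cong) (auto simp: indicator_def)
    also have "\<dots> = ennreal drift_gain * emeasure Paths {\<omega>\<in>space Paths. e \<le> q_path p \<omega> t}"
      by (rule nn_integral_cmult_indicator[OF sets_q_path_ge])
    finally show "emeasure Paths {\<omega>\<in>space Paths. e \<le> q_path p \<omega> t} * ennreal drift_gain
                    = (\<integral>\<^sup>+\<omega>. (if e \<le> q_path p \<omega> t then ennreal drift_gain else 0) \<partial>Paths)"
      by (simp add: mult.commute)
  qed
  also have "\<dots> = (\<integral>\<^sup>+\<omega>. (\<Sum>t<T. if e \<le> q_path p \<omega> t then ennreal drift_gain else 0) \<partial>Paths)"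
    by (rule nn_integral_sum[symmetric]) measurable
  also have "\<dots> \<le> (\<integral>\<^sup>+\<omega>. lyap_sum e p T \<omega> \<partial>Paths)"
    unfolding lyap_sum_def by (intro nn_integral_mono) simp
  also have "\<dots> \<le> ennreal (lyap e p)" by (rule nn_integral_lyap_sum_le[OF assms])
  finally have sum_le: "(\<Sum>t<T. emeasure Paths {\<omega>\<in>space Paths. e \<le> q_path p \<omega> t} * ennreal drift_gain)
                     \<le> ennreal (lyap e p)" .
  have "(\<Sum>t<T. emeasure Paths {\<omega>\<in>space Paths. e \<le> q_path p \<omega> t} * ennreal drift_gain)
      = ennreal ((\<Sum>t<T. measure Paths {\<omega>\<in>space Paths. e \<le> q_path p \<omega> t}) * drift_gain)"
    using drift_gain_pos
    by (simp add: finite_measure.emeasure_eq_measure[OF finite_measure_paths] ennreal_mult[symmetric] sum_distrib_right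
        sum_ennreal del: ennreal_mult)
  then have "(\<Sum>t<T. measure Paths {\<omega>\<in>space Paths. e \<le> q_path p \<omega> t}) * drift_gain \<le> lyap e p"
    using sum_le lyap_nonneg[OF assms(1)] by (simp add: ennreal_le_iff)
  then show ?thesis using drift_gain_pos by (simp add: le_divide_eq)
qed

lemma summable_prob_q_path_ge:
  assumes "prob_vector p" "0 < e" "e \<le> 1/2"
  shows "summable (\<lambda>t. measure Paths {\<omega>\<in>space Paths. e \<le> q_path p \<omega> t})"
  by (rule summableI_nonneg_bounded[where x="lyap e p / drift_gain"]) (auto intro: sum_prob_q_path_ge_le[OF assms])

lemma AE_eventually_q_path_less:
  assumes "prob_vector p" "0 < e" "e \<le> 1/2"
  shows "AE \<omega> in Paths. eventually (\<lambda>t. q_path p \<omega> t < e) sequentially"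
proof -
  have "AE \<omega> in Paths. eventually (\<lambda>t. \<omega> \<in> space Paths - {\<omega>\<in>space Paths. e
           \<le> q_path p \<omega> t}) sequentially"
    by (rule borel_cantelli_AE1[OF sets_q_path_ge _ summable_prob_q_path_ge[OF assms]])
       (simp add: finite_measure.emeasure_eq_measure[OF finite_measure_paths])
  then show ?thesis by (rule AE_mp) (auto intro!: AE_I2 elim: eventually_mono)
qed

lemma sets_upcrossings_ge:
  "{\<omega>\<in>space Paths. k \<le> upcrossings (q_path p \<omega>) n} \<in> sets Paths"
  unfolding upcrossings_def by measurable

lemma emeasure_sigma_k_finite:
  "emeasure Paths {\<omega>\<in>space Paths. sigma_k (q_path p \<omega>) k < \<infinity>} = (SUP n. prob_upcrossings p n k)"
proof -
  define A where "A n = {\<omega>\<in>space Paths. k \<le> upcrossings (q_path p \<omega>) n}" for n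
  have eq: "{\<omega>\<in>space Paths. sigma_k (q_path p \<omega>) k < \<infinity>} = (\<Union>n. A n)"
    unfolding A_def sigma_k_finite_iff by auto
  have "range A \<subseteq> sets Paths" unfolding A_def using sets_upcrossings_ge by auto
  moreover have "incseq A" unfolding A_def incseq_def using upcrossings_mono order_trans by blast
  ultimately have "(SUP n. emeasure Paths (A n)) = emeasure Paths (\<Union>n. A n)"
    by (rule SUP_emeasure_incseq)
  moreover have "emeasure Paths (A n) = prob_upcrossings p n k" for n
  proof -
    have "prob_upcrossings p n k = (\<integral>\<^sup>+\<omega>. indicator (A n) \<omega> \<partial>Paths)"
      unfolding prob_upcrossings_def A_def by (intro nn_integral_cong) (auto simp: indicator_def)
    also have "\<dots> = emeasure Paths (A n)"
      by (rule nn_integral_indicator) (simp add: A_def sets_upcrossings_ge)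
    finally show ?thesis by simp
  qed
  ultimately show ?thesis unfolding eq by simp
qed

lemma measure_sigma_k_Suc_le:
  assumes "prob_vector p"
  shows "measure Paths {\<omega>\<in>space Paths. sigma_k (q_path p \<omega>) (Suc k) < \<infinity>}
           \<le> rho * measure Paths {\<omega>\<in>space Paths. sigma_k (q_path p \<omega>) k < \<infinity>}"
proof -
  have "emeasure Paths {\<omega>\<in>space Paths. sigma_k (q_path p \<omega>) (Suc k) < \<infinity>}
          = (SUP n. prob_upcrossings p n (Suc k))"
    by (rule emeasure_sigma_k_finite)
  also have "\<dots> \<le> (SUP n. ennreal rho * prob_upcrossings p n k)"
    by (rule SUP_mono) (use prob_upcrossings_Suc_le_rho[OF assms] in blast)
  also have "\<dots> = ennreal rho * (SUP n. prob_upcrossings p n k)"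
    by (rule SUP_mult_left_ennreal[symmetric])
  also have "\<dots> = ennreal rho * emeasure Paths {\<omega>\<in>space Paths. sigma_k (q_path p \<omega>) k < \<infinity>}"
    by (subst emeasure_sigma_k_finite) (rule refl)
  finally have "ennreal (measure Paths {\<omega>\<in>space Paths. sigma_k (q_path p \<omega>) (Suc k) < \<infinity>})
      \<le> ennreal (rho * measure Paths {\<omega>\<in>space Paths. sigma_k (q_path p \<omega>) k < \<infinity>})"
    using rho_ge_half
    by (simp add: finite_measure.emeasure_eq_measure[OF finite_measure_paths] ennreal_mult)
  then show ?thesis using rho_ge_half by (simp add: ennreal_le_iff)
qed

lemma sigma_k_geometric:
  assumes "prob_vector p"
  shows "\<exists>\<rho><1. measure Paths {\<omega>\<in>space Paths. sigma_k (q_path p \<omega>) 1 < \<infinity>} < \<rho>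
            \<and> (\<forall>k\<ge>2. measure Paths {\<omega>\<in>space Paths. sigma_k (q_path p \<omega>) k < \<infinity>}
                     / measure Paths {\<omega>\<in>space Paths. sigma_k (q_path p \<omega>) (k - 1) < \<infinity>} < \<rho>)"
proof (intro exI conjI allI impI)
  define \<rho> where "\<rho> = (1 + rho) / 2"
  have r1: "rho < \<rho>" "\<rho> < 1" "0 < \<rho>" unfolding \<rho>_def using rho_less_1 rho_ge_half
    by auto
  show "(1 + rho) / 2 < 1" using r1 unfolding \<rho>_def by simp
  have "measure Paths {\<omega>\<in>space Paths. sigma_k (q_path p \<omega>) (Suc 0) < \<infinity>}
          \<le> rho * measure Paths {\<omega>\<in>space Paths. sigma_k (q_path p \<omega>) 0 < \<infinity>}"
    by (rule measure_sigma_k_Suc_le[OF assms])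
  also have "\<dots> \<le> rho * 1" using rho_ge_half prob_space.prob_le_1[OF prob_space_paths]
    by (intro mult_left_mono) auto
  finally show "measure Paths {\<omega>\<in>space Paths. sigma_k (q_path p \<omega>) 1 < \<infinity>} < (1 + rho) / 2"
    using r1 unfolding \<rho>_def by simp
  fix k :: nat assume k: "2 \<le> k"
  then obtain j where j: "k = Suc j" by (cases k) auto
  define m1 where "m1 = measure Paths {\<omega>\<in>space Paths. sigma_k (q_path p \<omega>) k < \<infinity>}"
  define m0 where "m0 = measure Paths {\<omega>\<in>space Paths. sigma_k (q_path p \<omega>) (k - 1) < \<infinity>}"
  have step: "m1 \<le> rho * m0" unfolding m1_def m0_def j using measure_sigma_k_Suc_le[OF assms, of j]
    by simp
  have m0: "0 \<le> m0" unfolding m0_def by simp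
  show "measure Paths {\<omega>\<in>space Paths. sigma_k (q_path p \<omega>) k
          < \<infinity>} / measure Paths {\<omega>\<in>space Paths. sigma_k (q_path p \<omega>) (k - 1) < \<infinity>} < (1 + rho) / 2"
  proof (cases "m0 = 0")
    case True
    then show ?thesis using r1 unfolding m0_def \<rho>_def by simp
  next
    case False
    then have "0 < m0" using m0 by simp
    then have "m1 / m0 \<le> rho" using step by (simp add: divide_le_eq mult.commute)
    then have "m1 / m0 < (1 + rho) / 2" using r1 unfolding \<rho>_def by linarith
    then show ?thesis unfolding m1_def m0_def .
  qed
qed

lemma q_path_nonneg: "prob_vector p \<Longrightarrow> 0 \<le> q_path p \<omega> t"
  unfolding q_path_def using prob_vector_le_1[OF prob_vector_samba[of p \<beta> \<omega> t]] beta by simp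

lemma AE_q_path_tendsto_0:
  assumes "prob_vector p"
  shows "AE \<omega> in Paths. (\<lambda>t. q_path p \<omega> t) \<longlonglongrightarrow> 0"
proof (rule AE_tendsto_0_if_eventually_less)
  show "AE \<omega> in Paths. eventually (\<lambda>t. q_path p \<omega> t < e) sequentially" if "0 < e" "e \<le> 1/2" for e
    using AE_eventually_q_path_less[OF assms that] .
  show "0 \<le> q_path p \<omega> t" for \<omega> t
    by (rule q_path_nonneg[OF assms])
qed simp

end

lemma exists_reward_gap:
  fixes r :: "'a::finite \<Rightarrow> real"
  assumes "\<And>a. a \<noteq> astar \<Longrightarrow> r a < r astar"
  shows "\<exists>D. 0 < D \<and> D \<le> 1 \<and> (\<forall>a. a \<noteq> astar \<longrightarrow> r a + D \<le> r astar)"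
proof (intro exI conjI allI impI)
  let ?gaps = "insert 1 ((\<lambda>a. r astar - r a) ` (UNIV - {astar}))"
  show "0 < Min ?gaps" "Min ?gaps \<le> 1"
    using assms by auto
  fix a
  assume "a \<noteq> astar"
  then have "Min ?gaps \<le> r astar - r a" by (intro Min_le) auto
  then show "r a + Min ?gaps \<le> r astar" by simp
qed

theorem proposition15:
  fixes r :: "'a::{finite,linorder} \<Rightarrow> real"
    and astar :: 'a
    and p0 :: "'a \<Rightarrow> real"
    and \<beta> :: real
  assumes r_range: "\<And>a. 0 \<le> r a \<and> r a \<le> 1"
    and optimal: "\<And>a. a \<noteq> astar \<Longrightarrow> r a < r astar"
    and p0_pos: "\<And>a. p0 a > 0"
    and p0_sum: "(\<Sum>a\<in>UNIV. p0 a) = 1"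
    and beta: "0 < \<beta>" "\<beta> \<le> 1"
  defines "\<Omega> \<equiv> noise_seq r"
    and "q \<equiv> (\<lambda>\<omega> t. 1 - samba (\<lambda>p. \<beta> / (1 - ln p)) p0 \<omega> t astar)"
  shows "(1 - p0 astar \<le> 1/2 \<longrightarrow>
            (\<exists>\<rho><1. measure \<Omega> {\<omega>\<in>space \<Omega>. sigma_k (q \<omega>) 1 < \<infinity>} < \<rho>
                   \<and> (\<forall>k\<ge>2. measure \<Omega> {\<omega>\<in>space \<Omega>. sigma_k (q \<omega>) k < \<infinity>}
                              / measure \<Omega> {\<omega>\<in>space \<Omega>. sigma_k (q \<omega>) (k - 1) < \<infinity>} < \<rho>)))
       \<and> summable (\<lambda>t. measure \<Omega> {\<omega>\<in>space \<Omega>. q \<omega> t \<ge> 1/2})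
       \<and> (AE \<omega> in \<Omega>. (\<lambda>t. q \<omega> t) \<longlonglongrightarrow> 0)"
proof -
  obtain D where D: "0 < D" "D \<le> 1" "\<And>a. a \<noteq> astar \<Longrightarrow> r a + D \<le> r astar"
    using exists_reward_gap[where r=r and astar=astar, OF optimal] by auto
  interpret samba_bandit r astar \<beta> D
    by unfold_locales (use r_range D beta in auto)
  have q: "q = q_path p0"
    unfolding q_def q_path_def samba_rate_def[abs_def] by simp
  have p0: "prob_vector p0"
    using p0_pos p0_sum by (simp add: prob_vector_def)
  show ?thesis
    unfolding q \<Omega>_def
    using sigma_k_geometric[OF p0] summable_prob_q_path_ge[OF p0, of "1/2"] AE_q_path_tendsto_0[OF p0]
    by (intro conjI impI) simp_all
qed

end
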